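(* For every $\beta\ge 0$ and every $\vartheta_0\in\mathscr S'$, a solution in $\mathscr S'$ (of the Dirichlet problem if $\beta<1$, Robin problem if $\beta=1$, Neumann problem if $\beta>1$) with initial condition $\vartheta_0$, in the sense defined in the context, exists and is unique in $\mathcal C([0,\infty),\mathscr S')$.
   Context: Fix $\alpha,\alpha_L,\alpha_R,\vartheta_L,\vartheta_R>0$. For $\beta\ge 0$ let $\mathcal L=\mathcal L_\beta$ be the nonnegative self-adjoint operator on $L^2([0,1])$ acting as $\mathcal LF=-\alpha F''$ with domain: if $\beta<1$, $\{F\in\mathcal W^{1,2}_0: F''\in L^2\}$; if $\beta=1$, $\{F\in\mathcal W^{2,2}: \alpha F'(0)=\alpha_L F(0),\ -\alpha F'(1)=\alpha_R F(1)\}$; if $\beta>1$, $\{F\in\mathcal W^{2,2}: F'(0)=F'(1)=0\}$. Let $0\le\lambda_0\le\lambda_1\le\dots$ be its eigenvalues with orthonormal eigenbasis $\{\psi_n\}$. Let $\mathscr S=\{F\in L^2([0,1]): \|F\|_k^2:=\sum_n(1+\lambda_n)^k\langle F,\psi_n\rangle^2<\infty\ \forall k\in\mathbb Z\}$ with the topology of these norms (a nuclear Fréchet space of $\mathcal C^\infty([0,1])$ functions), $\mathscr S'$ its topological dual with the strong topology, and $\langle G,g\rangle:=g(G)$ for $G\in\mathscr S$, $g\in\mathscr S'$. Let $\mathcal A:=-\mathcal L$ restricted to $\mathscr S$; it maps $\mathscr S$ continuously into $\mathscr S$ and $\mathcal AG=\alpha G''$. Let $h=h_{\vartheta_L,\vartheta_R}\in\mathcal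 C^\infty([0,1])$ be: $h(u)=\vartheta_L+(\vartheta_R-\vartheta_L)u$ if $\beta<1$; $h(u)=\vartheta_L+(\vartheta_R-\vartheta_L)\frac{\alpha/\alpha_L+u}{\alpha/\alpha_L+1+\alpha/\alpha_R}$ if $\beta=1$; $h(u)\equiv\frac{\alpha_L\vartheta_L+\alpha_R\vartheta_R}{\alpha_L+\alpha_R}$ if $\beta>1$; and $h\,du\in\mathscr S'$ the distribution $G\mapsto\int_0^1G(u)h(u)du$. A family $\{\vartheta(t):t\ge 0\}\subset\mathscr S'$ is a solution in $\mathscr S'$ with initial condition $\vartheta_0\in\mathscr S'$ if there is $\{g(t):t\ge0\}\subset\mathscr S'$ such that for all $G\in\mathscr S$ and $t\ge 0$: $\langle G,\vartheta(t)\rangle=\langle G,h\,du\rangle+\langle G,g(t)\rangle$ and $\langle G,g(t)\rangle=\langle G,\vartheta_0-h\,du\rangle+\int_0^t\langle\mathcal AG,g(s)\rangle ds$. $\mathcal C([0,\infty),\mathscr S')$ denotes the continuous $\mathscr S'$-valued paths. *)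

theory Defs
  imports "HOL-Analysis.Analysis"
begin

definition sq_int :: "(real \<Rightarrow> real) set" where
  "sq_int = {F. set_borel_measurable lborel {0..1} F
               \<and> set_integrable lborel {0..1} (\<lambda>u. (F u)^2)}"

definition L2inner :: "(real \<Rightarrow> real) \<Rightarrow> (real \<Rightarrow> real) \<Rightarrow> real" where
  "L2inner F G = (LINT u:{0..1}|lborel. F u * G u)"

definition is_eigenfunction ::
  "real \<Rightarrow> real \<Rightarrow> real \<Rightarrow> real \<Rightarrow> real \<Rightarrow> (real \<Rightarrow> real) \<Rightarrow> bool" where
  "is_eigenfunction \<beta> \<alpha> \<alpha>L \<alpha>R lam \<psi> \<longleftrightarrow>
     (\<exists>\<psi>' \<psi>''.
        (\<forall>u\<in>{0..1}. (\<psi> has_real_derivative \<psi>' u) (at u within {0..1})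
                   \<and> (\<psi>' has_real_derivative \<psi>'' u) (at u within {0..1})
                   \<and> - \<alpha> * \<psi>'' u = lam * \<psi> u)
      \<and> (if \<beta> < 1 then \<psi> 0 = 0 \<and> \<psi> 1 = 0
         else if \<beta> = 1 then \<alpha> * \<psi>' 0 = \<alpha>L * \<psi> 0 \<and> - \<alpha> * \<psi>' 1 = \<alpha>R * \<psi> 1
         else \<psi>' 0 = 0 \<and> \<psi>' 1 = 0))"

definition is_eigenbasis ::
  "real \<Rightarrow> real \<Rightarrow> real \<Rightarrow> real \<Rightarrow> (nat \<Rightarrow> real \<Rightarrow> real) \<Rightarrow> (nat \<Rightarrow> real) \<Rightarrow> bool" where
  "is_eigenbasis \<beta> \<alpha> \<alpha>L \<alpha>R \<psi> lam \<longleftrightarrow>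
     mono lam
   \<and> (\<forall>n. \<psi> n \<in> sq_int \<and> is_eigenfunction \<beta> \<alpha> \<alpha>L \<alpha>R (lam n) (\<psi> n))
   \<and> (\<forall>n m. L2inner (\<psi> n) (\<psi> m) = (if n = m then 1 else 0))
   \<and> (\<forall>F\<in>sq_int. (\<forall>n. L2inner F (\<psi> n) = 0) \<longrightarrow> (AE u in lborel. u \<in> {0..1} \<longrightarrow> F u = 0))"

definition Snorm_sq :: "(nat \<Rightarrow> real \<Rightarrow> real) \<Rightarrow> (nat \<Rightarrow> real) \<Rightarrow> int \<Rightarrow> (real \<Rightarrow> real) \<Rightarrow> real" where
  "Snorm_sq \<psi> lam k F = (\<Sum>n. (1 + lam n) powi k * (L2inner F (\<psi> n))^2)"

definition Sspace :: "(nat \<Rightarrow> real \<Rightarrow> real) \<Rightarrow> (nat \<Rightarrow> real) \<Rightarrow> (real \<Rightarrow> real) set" where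
  "Sspace \<psi> lam = {F \<in> sq_int. \<forall>k::int. summable (\<lambda>n. (1 + lam n) powi k * (L2inner F (\<psi> n))^2)}"

text \<open>Topological dual S': continuous linear functionals on S (continuity w.r.t. the
  locally convex topology of the increasing family of norms ||.||_k), represented
  extensionally (value 0 outside S).  Pairing: <G,g> = g G.\<close>
definition Sdual :: "(nat \<Rightarrow> real \<Rightarrow> real) \<Rightarrow> (nat \<Rightarrow> real) \<Rightarrow> ((real \<Rightarrow> real) \<Rightarrow> real) set" where
  "Sdual \<psi> lam = {g. (\<forall>F\<in>Sspace \<psi> lam. \<forall>G\<in>Sspace \<psi> lam. \<forall>a b.
                         g (\<lambda>u. a * F u + b * G u) = a * g F + b * g G)
                  \<and> (\<exists>k::int. \<exists>C. \<forall>F\<in>Sspace \<psi> lam. \<bar>g F\<bar> \<le> C * sqrt (Snorm_sq \<psi> lam k F))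
                  \<and> (\<forall>F. F \<notin> Sspace \<psi> lam \<longrightarrow> g F = 0)}"

definition S_bounded :: "(nat \<Rightarrow> real \<Rightarrow> real) \<Rightarrow> (nat \<Rightarrow> real) \<Rightarrow> (real \<Rightarrow> real) set \<Rightarrow> bool" where
  "S_bounded \<psi> lam B \<longleftrightarrow> B \<subseteq> Sspace \<psi> lam \<and> (\<forall>k::int. \<exists>M. \<forall>F\<in>B. Snorm_sq \<psi> lam k F \<le> M)"

text \<open>Paths in C([0,oo), S') where S' carries the strong topology
  (uniform convergence on bounded subsets of S).\<close>
definition strong_cont_path ::
  "(nat \<Rightarrow> real \<Rightarrow> real) \<Rightarrow> (nat \<Rightarrow> real) \<Rightarrow> (real \<Rightarrow> (real \<Rightarrow> real) \<Rightarrow> real) \<Rightarrow> bool" where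
  "strong_cont_path \<psi> lam \<theta> \<longleftrightarrow>
     (\<forall>t\<ge>0. \<theta> t \<in> Sdual \<psi> lam)
   \<and> (\<forall>B. S_bounded \<psi> lam B \<longrightarrow>
        (\<forall>t0\<ge>0. \<forall>\<epsilon>>0. \<exists>\<delta>>0. \<forall>t\<ge>0. \<bar>t - t0\<bar> < \<delta> \<longrightarrow>
            (\<forall>F\<in>B. \<bar>\<theta> t F - \<theta> t0 F\<bar> < \<epsilon>)))"

text \<open>The operator A = -L restricted to S (via the spectral representation of L).\<close>
definition opA :: "(nat \<Rightarrow> real \<Rightarrow> real) \<Rightarrow> (nat \<Rightarrow> real) \<Rightarrow> (real \<Rightarrow> real) \<Rightarrow> (real \<Rightarrow> real)" where
  "opA \<psi> lam G = (SOME H. H \<in> Sspace \<psi> lam \<and> (\<forall>n. L2inner H (\<psi> n) = - lam n * L2inner G (\<psi> n)))"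

definition hprof :: "real \<Rightarrow> real \<Rightarrow> real \<Rightarrow> real \<Rightarrow> real \<Rightarrow> real \<Rightarrow> real \<Rightarrow> real" where
  "hprof \<beta> \<alpha> \<alpha>L \<alpha>R thL thR u =
     (if \<beta> < 1 then thL + (thR - thL) * u
      else if \<beta> = 1 then thL + (thR - thL) * ((\<alpha> / \<alpha>L + u) / (\<alpha> / \<alpha>L + 1 + \<alpha> / \<alpha>R))
      else (\<alpha>L * thL + \<alpha>R * thR) / (\<alpha>L + \<alpha>R))"

definition hdu :: "real \<Rightarrow> real \<Rightarrow> real \<Rightarrow> real \<Rightarrow> real \<Rightarrow> real \<Rightarrow> (real \<Rightarrow> real) \<Rightarrow> real" where
  "hdu \<beta> \<alpha> \<alpha>L \<alpha>R thL thR G = (LINT u:{0..1}|lborel. G u * hprof \<beta> \<alpha> \<alpha>L \<alpha>R thL thR u)"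

definition is_solution ::
  "real \<Rightarrow> real \<Rightarrow> real \<Rightarrow> real \<Rightarrow> real \<Rightarrow> real \<Rightarrow> (nat \<Rightarrow> real \<Rightarrow> real) \<Rightarrow> (nat \<Rightarrow> real)
   \<Rightarrow> ((real \<Rightarrow> real) \<Rightarrow> real) \<Rightarrow> (real \<Rightarrow> (real \<Rightarrow> real) \<Rightarrow> real) \<Rightarrow> bool" where
  "is_solution \<beta> \<alpha> \<alpha>L \<alpha>R thL thR \<psi> lam \<theta>0 \<theta> \<longleftrightarrow>
     (\<forall>t\<ge>0. \<theta> t \<in> Sdual \<psi> lam)
   \<and> (\<exists>g. (\<forall>t\<ge>0. g t \<in> Sdual \<psi> lam)
        \<and> (\<forall>G\<in>Sspace \<psi> lam. \<forall>t\<ge>0.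
              \<theta> t G = hdu \<beta> \<alpha> \<alpha>L \<alpha>R thL thR G + g t G
            \<and> (\<lambda>s. g s (opA \<psi> lam G)) integrable_on {0..t}
            \<and> g t G = \<theta>0 G - hdu \<beta> \<alpha> \<alpha>L \<alpha>R thL thR G
                       + integral {0..t} (\<lambda>s. g s (opA \<psi> lam G))))"

end

theory Submission
  imports Defs
begin

(*
  Everything is diagonal in the eigenbasis psi_n.  For F in S the expansion
  F = sum_n <F,psi_n> psi_n converges in every norm ||.||_k, and each element d of S' is
  continuous for one of these norms, so d F = sum_n <F,psi_n> d(psi_n): d is determined by its
  values on the eigenfunctions.  As A psi_n = -lam_n psi_n, testing the integral equation for g
  against psi_n gives g_t(psi_n) = g_0(psi_n) - lam_n int_0^t g_s(psi_n) ds, so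
  g_t(psi_n) = exp(-lam_n t) g_0(psi_n), which proves uniqueness.  Conversely, since
  lam_n = alpha int_0^1 psi_n'^2 - alpha [psi_n' psi_n]_0^1 >= 0 by the boundary conditions,
  g_t F = sum_n exp(-lam_n t) <F,psi_n> g_0(psi_n) defines an element of S'; its partial sums
  converge uniformly in t, so the integral equation holds term by term, and
  |exp(-lam t) - exp(-lam s)| <= lam |t - s| makes t -> g_t Lipschitz on bounded subsets of S,
  at the cost of two more powers of 1 + lam_n in the norm.  The solution is h du + g_t with
  g_0 = theta_0 - h du.
*)

section \<open>Square-integrable functions on the unit interval\<close>

abbreviation lebesgue_01 :: "real measure" where
  "lebesgue_01 \<equiv> restrict_space lborel {0..1}"

interpretation lebesgue_01: finite_measure lebesgue_01
  by (rule finite_measureI) (simp add: emeasure_restrict_space space_restrict_space)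

lemma sq_int_iff: "F \<in> sq_int \<longleftrightarrow> F \<in> borel_measurable lebesgue_01 \<and> integrable lebesgue_01 (\<lambda>u. (F u)^2)"
  unfolding sq_int_def set_borel_measurable_def set_integrable_def
  by (simp add: borel_measurable_restrict_space_iff integrable_restrict_space)

lemma L2inner_eq_integral: "L2inner F G = (LINT u|lebesgue_01. F u * G u)"
  unfolding L2inner_def set_lebesgue_integral_def by (simp add: integral_restrict_space)

lemma hdu_eq_L2inner: "hdu \<beta> \<alpha> \<alpha>L \<alpha>R thL thR G = L2inner G (hprof \<beta> \<alpha> \<alpha>L \<alpha>R thL thR)"
  unfolding hdu_def L2inner_def ..

lemma sq_int_measurable: "F \<in> sq_int \<Longrightarrow> F \<in> borel_measurable lebesgue_01"
  by (simp add: sq_int_iff)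

lemma sq_int_integrable_sq: "F \<in> sq_int \<Longrightarrow> integrable lebesgue_01 (\<lambda>u. (F u)^2)"
  by (simp add: sq_int_iff)

lemma sq_int_integrable: "F \<in> sq_int \<Longrightarrow> integrable lebesgue_01 F"
  by (rule lebesgue_01.square_integrable_imp_integrable) (simp_all add: sq_int_iff)

lemma integrable_mult_sq_int:
  assumes "F \<in> sq_int" "G \<in> sq_int"
  shows "integrable lebesgue_01 (\<lambda>u. F u * G u)"
proof (rule Bochner_Integration.integrable_bound)
  show "integrable lebesgue_01 (\<lambda>u. (F u)^2 + (G u)^2)"
    using assms by (simp add: sq_int_integrable_sq)
  show "(\<lambda>u. F u * G u) \<in> borel_measurable lebesgue_01"
    using assms by (intro borel_measurable_times sq_int_measurable)
  have "\<bar>x * y\<bar> \<le> x^2 + y^2" for x y :: real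
  proof -
    have "2 * (\<bar>x\<bar> * \<bar>y\<bar>) \<le> x^2 + y^2" "0 \<le> \<bar>x\<bar> * \<bar>y\<bar>"
      using sum_squares_bound[of "\<bar>x\<bar>" "\<bar>y\<bar>"] by simp_all
    then show ?thesis
      unfolding abs_mult by linarith
  qed
  then show "AE u in lebesgue_01. norm (F u * G u) \<le> norm ((F u)^2 + (G u)^2)"
    by (intro AE_I2) simp
qed

lemma sq_int_lincomb:
  assumes "F \<in> sq_int" "G \<in> sq_int"
  shows "(\<lambda>u. a * F u + b * G u) \<in> sq_int"
proof -
  have "(\<lambda>u. (a * F u + b * G u)^2) = (\<lambda>u. a^2 * (F u)^2 + b^2 * (G u)^2 + 2*a*b * (F u * G u))"
    by (simp add: power2_eq_square algebra_simps)
  moreover have "integrable lebesgue_01 (\<lambda>u. a^2 * (F u)^2 + b^2 * (G u)^2 + 2*a*b * (F u * G u))"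
    using assms by (intro Bochner_Integration.integrable_add Bochner_Integration.integrable_mult_right
        integrable_mult_sq_int sq_int_integrable_sq)
  moreover have "(\<lambda>u. a * F u + b * G u) \<in> borel_measurable lebesgue_01"
    using assms by (intro borel_measurable_add borel_measurable_times borel_measurable_const sq_int_measurable)
  ultimately show ?thesis
    by (simp add: sq_int_iff)
qed

lemma sq_int_diff: "F \<in> sq_int \<Longrightarrow> G \<in> sq_int \<Longrightarrow> (\<lambda>u. F u - G u) \<in> sq_int"
  using sq_int_lincomb[of F G 1 "-1"] by simp

lemma sq_int_const: "(\<lambda>u. c) \<in> sq_int"
  by (simp add: sq_int_iff)

lemma sq_int_sum: "(\<And>n. n \<in> A \<Longrightarrow> f n \<in> sq_int) \<Longrightarrow> (\<lambda>u. \<Sum>n\<in>A. c n * f n u) \<in> sq_int"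
proof (induction A rule: infinite_finite_induct)
  case (insert x A)
  then show ?case
    using sq_int_lincomb[of "f x" "\<lambda>u. \<Sum>n\<in>A. c n * f n u" "c x" 1] by simp
qed (simp_all add: sq_int_const)

lemma sq_int_affine: "(\<lambda>u. a + b * u) \<in> sq_int"
proof -
  have id_measurable: "(\<lambda>u::real. u) \<in> borel_measurable lebesgue_01"
    by (rule measurable_restrict_space1) simp
  moreover have "integrable lebesgue_01 (\<lambda>u::real. u^2)"
    by (rule lebesgue_01.integrable_const_bound[where B=1])
      (auto simp: space_restrict_space abs_square_le_1 intro: borel_measurable_power[OF id_measurable])
  ultimately have "(\<lambda>u. u) \<in> sq_int"
    by (simp add: sq_int_iff)
  then show ?thesis
    using sq_int_lincomb[OF sq_int_const, of "\<lambda>u. u" 1 a b] by simp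
qed

lemma hprof_sq_int: "hprof \<beta> \<alpha> \<alpha>L \<alpha>R thL thR \<in> sq_int"
proof -
  let ?c = "\<alpha> / \<alpha>L + 1 + \<alpha> / \<alpha>R"
  define a where "a = (if \<beta> < 1 then thL else if \<beta> = 1 then thL + (thR - thL) * (\<alpha> / \<alpha>L) / ?c
    else (\<alpha>L * thL + \<alpha>R * thR) / (\<alpha>L + \<alpha>R))"
  define b where "b = (if \<beta> < 1 then thR - thL else if \<beta> = 1 then (thR - thL) / ?c else 0)"
  have "hprof \<beta> \<alpha> \<alpha>L \<alpha>R thL thR = (\<lambda>u. a + b * u)"
    by (auto simp: hprof_def a_def b_def fun_eq_iff add_divide_distrib algebra_simps)
  then show ?thesis
    by (simp only: sq_int_affine)
qed

lemma L2inner_commute: "L2inner F G = L2inner G F"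
  unfolding L2inner_eq_integral by (simp add: mult.commute)

lemma L2inner_self_nonneg: "L2inner F F \<ge> 0"
  unfolding L2inner_eq_integral by (rule integral_nonneg_AE) simp

lemma L2inner_lincomb_left:
  assumes "F \<in> sq_int" "G \<in> sq_int" "H \<in> sq_int"
  shows "L2inner (\<lambda>u. a * F u + b * G u) H = a * L2inner F H + b * L2inner G H"
  using assms unfolding L2inner_eq_integral
  by (simp add: distrib_right mult.assoc integrable_mult_sq_int)

lemma L2inner_diff_left:
  assumes "F \<in> sq_int" "G \<in> sq_int" "H \<in> sq_int"
  shows "L2inner (\<lambda>u. F u - G u) H = L2inner F H - L2inner G H"
  using L2inner_lincomb_left[OF assms, of 1 "-1"] by simp

lemma L2inner_sum_left:
  assumes "\<And>n. n \<in> A \<Longrightarrow> f n \<in> sq_int" "H \<in> sq_int"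
  shows "L2inner (\<lambda>u. \<Sum>n\<in>A. c n * f n u) H = (\<Sum>n\<in>A. c n * L2inner (f n) H)"
  using assms
proof (induction A rule: infinite_finite_induct)
  case (insert x A)
  then show ?case
    using L2inner_lincomb_left[of "f x" "\<lambda>u. \<Sum>n\<in>A. c n * f n u" H "c x" 1]
    by (simp add: sq_int_sum)
qed (simp_all add: L2inner_eq_integral)

lemma L2inner_scale_left: "L2inner (\<lambda>u. c * F u) G = c * L2inner F G"
  unfolding L2inner_eq_integral by (simp add: mult.assoc)

lemma L2inner_diff_self:
  assumes "F \<in> sq_int" "G \<in> sq_int"
  shows "L2inner (\<lambda>u. F u - G u) (\<lambda>u. F u - G u) = L2inner F F - 2 * L2inner F G + L2inner G G"
proof -
  have "L2inner (\<lambda>u. F u - G u) (\<lambda>u. F u - G u)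
      = L2inner F (\<lambda>u. F u - G u) - L2inner G (\<lambda>u. F u - G u)"
    using assms by (intro L2inner_diff_left sq_int_diff)
  also have "\<dots> = L2inner F F - 2 * L2inner F G + L2inner G G"
    using assms L2inner_diff_left[OF assms, of F] L2inner_diff_left[OF assms, of G]
    by (simp add: L2inner_commute[of "\<lambda>u. F u - G u"] L2inner_commute[of G F])
  finally show ?thesis .
qed

lemma L2inner_Cauchy_Schwarz:
  assumes "F \<in> sq_int" "G \<in> sq_int"
  shows "\<bar>L2inner F G\<bar> \<le> sqrt (L2inner F F) * sqrt (L2inner G G)"
proof -
  have quadratic: "0 \<le> L2inner F F * t^2 - 2 * t * L2inner F G + L2inner G G" for t
  proof -
    have "(\<lambda>u. t * F u) \<in> sq_int"
      using sq_int_lincomb[OF assms(1,1), of t 0] by simp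
    then have "L2inner (\<lambda>u. t * F u - G u) (\<lambda>u. t * F u - G u)
        = t^2 * L2inner F F - 2 * t * L2inner F G + L2inner G G"
      using assms(2) by (simp add: L2inner_diff_self L2inner_scale_left L2inner_commute[of F "\<lambda>u. t * F u"]
          power2_eq_square)
    then show ?thesis
      using L2inner_self_nonneg[of "\<lambda>u. t * F u - G u"] by (simp add: mult.commute)
  qed
  have "(L2inner F G)^2 \<le> L2inner F F * L2inner G G"
  proof (cases "L2inner F F = 0")
    case True
    have "L2inner F G = 0"
      using quadratic[of "(L2inner G G + 1) / (2 * L2inner F G)"] True
      by (cases "L2inner F G = 0") (simp_all add: field_simps)
    then show ?thesis
      using True by simp
  next
    case False
    then have "L2inner F F > 0"
      using L2inner_self_nonneg[of F] by simp
    then show ?thesis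
      using quadratic[of "L2inner F G / L2inner F F"] by (simp add: power2_eq_square field_simps)
  qed
  then show ?thesis
    by (metis real_sqrt_abs real_sqrt_le_mono real_sqrt_mult)
qed

lemma L2inner_one_one: "L2inner (\<lambda>u. 1) (\<lambda>u. 1) = 1"
  by (simp add: L2inner_eq_integral space_restrict_space measure_restrict_space)

lemma integral_abs_le_L2norm:
  assumes "F \<in> sq_int"
  shows "(LINT u|lebesgue_01. \<bar>F u\<bar>) \<le> sqrt (L2inner F F)"
proof -
  have abs_F: "(\<lambda>u. \<bar>F u\<bar>) \<in> sq_int"
    using assms by (simp add: sq_int_iff borel_measurable_abs)
  have "(LINT u|lebesgue_01. \<bar>F u\<bar>) = L2inner (\<lambda>u. \<bar>F u\<bar>) (\<lambda>u. 1)"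
    by (simp add: L2inner_eq_integral)
  also have "\<dots> \<le> sqrt (L2inner (\<lambda>u. \<bar>F u\<bar>) (\<lambda>u. \<bar>F u\<bar>)) * sqrt (L2inner (\<lambda>u. 1) (\<lambda>u. 1))"
    using L2inner_Cauchy_Schwarz[OF abs_F sq_int_const[of 1]] by linarith
  also have "\<dots> = sqrt (L2inner F F)"
    by (simp add: L2inner_one_one L2inner_eq_integral abs_mult[symmetric])
  finally show ?thesis .
qed

lemma integral_sq_le_of_AE_tendsto:
  fixes f :: "nat \<Rightarrow> 'a \<Rightarrow> real"
  assumes [measurable]: "\<And>i. f i \<in> borel_measurable M" "g \<in> borel_measurable M"
    and lim: "AE u in M. (\<lambda>i. f i u) \<longlonglongrightarrow> g u"
    and sq_integrable: "\<And>i. integrable M (\<lambda>u. (f i u)^2)"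
    and bound: "eventually (\<lambda>i. (LINT u|M. (f i u)^2) \<le> B) sequentially"
  shows "integrable M (\<lambda>u. (g u)^2)" "(LINT u|M. (g u)^2) \<le> B"
proof -
  obtain i where "(LINT u|M. (f i u)^2) \<le> B"
    using bound by (auto simp: eventually_sequentially)
  moreover have "(LINT u|M. (f i u)^2) \<ge> 0"
    by (rule integral_nonneg_AE) simp
  ultimately have B: "B \<ge> 0"
    by linarith
  have "AE u in M. ennreal ((g u)^2) = liminf (\<lambda>i. ennreal ((f i u)^2))"
    using lim
  proof eventually_elim
    case (elim u)
    then have "(\<lambda>i. ennreal ((f i u)^2)) \<longlonglongrightarrow> ennreal ((g u)^2)"
      by (intro tendsto_ennrealI tendsto_power)
    from lim_imp_Liminf[OF trivial_limit_sequentially this] show ?case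
      by simp
  qed
  then have "(\<integral>\<^sup>+u. ennreal ((g u)^2) \<partial>M) = (\<integral>\<^sup>+u. liminf (\<lambda>i. ennreal ((f i u)^2)) \<partial>M)"
    by (rule nn_integral_cong_AE)
  also have "\<dots> \<le> liminf (\<lambda>i. \<integral>\<^sup>+u. ennreal ((f i u)^2) \<partial>M)"
    by (rule nn_integral_liminf) simp
  also have "\<dots> \<le> liminf (\<lambda>i. ennreal B)"
    using bound by (intro Liminf_mono) (auto elim!: eventually_mono intro: ennreal_leI simp: nn_integral_eq_integral[OF sq_integrable])
  finally have fatou: "(\<integral>\<^sup>+u. ennreal ((g u)^2) \<partial>M) \<le> ennreal B"
    by (simp add: Liminf_const)
  then show integrable: "integrable M (\<lambda>u. (g u)^2)"
    by (intro integrableI_bounded) (auto simp: le_less_trans)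
  have "(\<integral>\<^sup>+u. ennreal ((g u)^2) \<partial>M) = ennreal (LINT u|M. (g u)^2)"
    by (rule nn_integral_eq_integral[OF integrable]) simp
  then show "(LINT u|M. (g u)^2) \<le> B"
    using fatou B by simp
qed

lemma sq_int_Cauchy_AE_subseq:
  assumes s: "\<And>N. s N \<in> sq_int"
    and dist: "\<And>M N. M \<le> N \<Longrightarrow> L2inner (\<lambda>u. s N u - s M u) (\<lambda>u. s N u - s M u) \<le> T M"
    and T: "T \<longlonglongrightarrow> 0"
  obtains r where "strict_mono r" "AE u in lebesgue_01. convergent (\<lambda>i. s (r i) u)"
proof -
  have L1_dist: "(LINT u|lebesgue_01. \<bar>s N u - s M u\<bar>) \<le> sqrt (T M)" if "M \<le> N" for M N
    using integral_abs_le_L2norm[OF sq_int_diff[OF s s], of N M] real_sqrt_le_mono[OF dist[OF that]]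
    by linarith
  have "(\<lambda>M. sqrt (T M)) \<longlonglongrightarrow> 0"
    using tendsto_real_sqrt[OF T] by simp
  have "\<exists>N. \<forall>i\<ge>N. \<forall>j\<ge>N. (LINT u|lebesgue_01. norm (s i u - s j u)) < e" if "e > 0" for e
  proof -
    obtain N where N: "\<And>M. M \<ge> N \<Longrightarrow> sqrt (T M) < e"
      using order_tendstoD(2)[OF \<open>(\<lambda>M. sqrt (T M)) \<longlonglongrightarrow> 0\<close> \<open>e > 0\<close>]
      by (auto simp: eventually_sequentially)
    have "(LINT u|lebesgue_01. \<bar>s i u - s j u\<bar>) < e" if "i \<ge> N" "j \<ge> N" for i j
    proof (cases "j \<le> i")
      case True
      then show ?thesis
        using L1_dist[OF True] N[OF that(2)] by linarith
    next
      case False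
      then show ?thesis
        using L1_dist[of i j] N[OF that(1)] by (simp add: abs_minus_commute)
    qed
    then show ?thesis
      by auto
  qed
  then obtain r where "strict_mono r" "AE u in lebesgue_01. Cauchy (\<lambda>i. s (r i) u)"
    using cauchy_L1_AE_cauchy_subseq[of lebesgue_01 s] sq_int_integrable[OF s] by blast
  then show ?thesis
    using that by (simp add: Cauchy_convergent_iff)
qed

lemma sq_int_Cauchy_limit:
  assumes s: "\<And>N. s N \<in> sq_int"
    and dist: "\<And>M N. M \<le> N \<Longrightarrow> L2inner (\<lambda>u. s N u - s M u) (\<lambda>u. s N u - s M u) \<le> T M"
    and T: "T \<longlonglongrightarrow> 0"
  obtains H where "H \<in> sq_int" "\<And>N. L2inner (\<lambda>u. H u - s N u) (\<lambda>u. H u - s N u) \<le> T N"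
proof -
  obtain r where r: "strict_mono r" and conv: "AE u in lebesgue_01. convergent (\<lambda>i. s (r i) u)"
    using sq_int_Cauchy_AE_subseq[OF s dist T] by blast
  define H where "H u = lim (\<lambda>i. s (r i) u)" for u
  have s_measurable[measurable]: "s N \<in> borel_measurable lebesgue_01" for N
    by (rule sq_int_measurable[OF s])
  have H_measurable[measurable]: "H \<in> borel_measurable lebesgue_01"
    unfolding H_def by (rule borel_measurable_lim_metric) simp
  have H_dist: "integrable lebesgue_01 (\<lambda>u. (H u - s N u)^2)"
    "(LINT u|lebesgue_01. (H u - s N u)^2) \<le> T N" for N
  proof -
    have "eventually (\<lambda>i. N \<le> r i) sequentially"
      using eventually_ge_at_top[of N] by eventually_elim (rule le_trans[OF _ seq_suble[OF r]])
    then have "eventually (\<lambda>i. (LINT u|lebesgue_01. (s (r i) u - s N u)^2) \<le> T N) sequentially"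
    proof eventually_elim
      case (elim i)
      then show ?case
        using dist[OF elim] by (simp add: L2inner_eq_integral power2_eq_square)
    qed
    moreover have "AE u in lebesgue_01. (\<lambda>i. s (r i) u - s N u) \<longlonglongrightarrow> H u - s N u"
      using conv by eventually_elim (auto simp: H_def convergent_LIMSEQ_iff intro: tendsto_diff)
    ultimately show "integrable lebesgue_01 (\<lambda>u. (H u - s N u)^2)"
      "(LINT u|lebesgue_01. (H u - s N u)^2) \<le> T N"
      using integral_sq_le_of_AE_tendsto[of "\<lambda>i u. s (r i) u - s N u" lebesgue_01 "\<lambda>u. H u - s N u"]
        sq_int_integrable_sq[OF sq_int_diff[OF s s]] by auto
  qed
  have "(\<lambda>u. H u - s 0 u) \<in> sq_int"
    using H_dist(1) by (simp add: sq_int_iff)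
  then have "H \<in> sq_int"
    using sq_int_lincomb[OF _ s[of 0], of "\<lambda>u. H u - s 0 u" 1 1] by simp
  then show ?thesis
    using H_dist(2) by (intro that) (simp_all add: L2inner_eq_integral power2_eq_square)
qed

section \<open>Nonnegativity of the eigenvalues\<close>

lemma eigenfunction_boundary_term_nonpos:
  fixes \<alpha> \<alpha>L \<alpha>R \<beta> :: real and \<psi> \<psi>' :: "real \<Rightarrow> real"
  assumes "\<alpha> > 0" "\<alpha>L > 0" "\<alpha>R > 0"
    and "if \<beta> < 1 then \<psi> 0 = 0 \<and> \<psi> 1 = 0
         else if \<beta> = 1 then \<alpha> * \<psi>' 0 = \<alpha>L * \<psi> 0 \<and> - \<alpha> * \<psi>' 1 = \<alpha>R * \<psi> 1
         else \<psi>' 0 = 0 \<and> \<psi>' 1 = 0"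
  shows "\<alpha> * (\<psi>' 1 * \<psi> 1 - \<psi>' 0 * \<psi> 0) \<le> 0"
proof -
  consider "\<psi> 0 = 0 \<and> \<psi> 1 = 0" | "\<psi>' 0 = 0 \<and> \<psi>' 1 = 0"
    | "\<alpha> * \<psi>' 0 = \<alpha>L * \<psi> 0 \<and> - \<alpha> * \<psi>' 1 = \<alpha>R * \<psi> 1"
    using assms(4) by (auto split: if_splits)
  then show ?thesis
  proof cases
    case 3
    then have h0: "\<alpha> * \<psi>' 0 = \<alpha>L * \<psi> 0" and h1: "\<alpha> * \<psi>' 1 = - (\<alpha>R * \<psi> 1)"
      by linarith+
    have "\<alpha> * (\<psi>' 1 * \<psi> 1 - \<psi>' 0 * \<psi> 0) = (\<alpha> * \<psi>' 1) * \<psi> 1 - (\<alpha> * \<psi>' 0) * \<psi> 0"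
      by (simp add: algebra_simps)
    also have "\<dots> = - (\<alpha>R * (\<psi> 1)^2 + \<alpha>L * (\<psi> 0)^2)"
      unfolding h0 h1 by (simp add: power2_eq_square)
    finally have "\<alpha> * (\<psi>' 1 * \<psi> 1 - \<psi>' 0 * \<psi> 0) = - (\<alpha>R * (\<psi> 1)^2 + \<alpha>L * (\<psi> 0)^2)" .
    moreover have "0 \<le> \<alpha>R * (\<psi> 1)^2 + \<alpha>L * (\<psi> 0)^2"
      using assms(2,3) by simp
    ultimately show ?thesis
      by linarith
  qed simp_all
qed

lemma eigenfunction_energy_identity:
  fixes \<psi> \<psi>' \<psi>'' :: "real \<Rightarrow> real"
  assumes d1: "\<And>u. u \<in> {0..1} \<Longrightarrow> (\<psi> has_real_derivative \<psi>' u) (at u within {0..1})"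
    and d2: "\<And>u. u \<in> {0..1} \<Longrightarrow> (\<psi>' has_real_derivative \<psi>'' u) (at u within {0..1})"
    and ode: "\<And>u. u \<in> {0..1} \<Longrightarrow> - \<alpha> * \<psi>'' u = lam * \<psi> u"
    and mass: "((\<lambda>u. \<psi> u * \<psi> u) has_integral m) {0..1}"
  shows "integral {0..1} (\<lambda>u. \<psi>' u * \<psi>' u) \<ge> 0"
    and "\<alpha> * (\<psi>' 1 * \<psi> 1 - \<psi>' 0 * \<psi> 0) = \<alpha> * integral {0..1} (\<lambda>u. \<psi>' u * \<psi>' u) - lam * m"
proof -
  have "continuous_on {0..1} \<psi>'"
    unfolding continuous_on_eq_continuous_within by (blast intro: DERIV_continuous d2)
  then have energy: "((\<lambda>u. \<psi>' u * \<psi>' u) has_integral integral {0..1} (\<lambda>u. \<psi>' u * \<psi>' u)) {0..1}"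
    "integral {0..1} (\<lambda>u. \<psi>' u * \<psi>' u) \<ge> 0"
    by (auto intro!: integrable_continuous_interval continuous_on_mult integral_nonneg)
  then show "integral {0..1} (\<lambda>u. \<psi>' u * \<psi>' u) \<ge> 0"
    by simp
  have "((\<lambda>u. \<psi>' u * \<psi> u) has_vector_derivative (\<psi>' u * \<psi>' u + \<psi>'' u * \<psi> u)) (at u within {0..1})"
    if "u \<in> {0..1}" for u
    unfolding has_real_derivative_iff_has_vector_derivative[symmetric]
    using DERIV_mult'[OF d2[OF that] d1[OF that]] by (simp add: add.commute)
  then have "((\<lambda>u. \<psi>' u * \<psi>' u + \<psi>'' u * \<psi> u) has_integral (\<psi>' 1 * \<psi> 1 - \<psi>' 0 * \<psi> 0)) {0..1}"
    by (intro fundamental_theorem_of_calculus) auto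
  from has_integral_mult_right[OF this, of \<alpha>]
  have "((\<lambda>u. \<alpha> * (\<psi>' u * \<psi>' u) + (- lam) * (\<psi> u * \<psi> u)) has_integral
      \<alpha> * (\<psi>' 1 * \<psi> 1 - \<psi>' 0 * \<psi> 0)) {0..1}"
  proof (rule has_integral_eq[rotated])
    show "\<alpha> * (\<psi>' u * \<psi>' u + \<psi>'' u * \<psi> u) = \<alpha> * (\<psi>' u * \<psi>' u) + (- lam) * (\<psi> u * \<psi> u)"
      if "u \<in> {0..1}" for u
      using arg_cong[OF ode[OF that], of "\<lambda>z. z * \<psi> u"] by (simp add: algebra_simps)
  qed
  moreover have "((\<lambda>u. \<alpha> * (\<psi>' u * \<psi>' u) + (- lam) * (\<psi> u * \<psi> u)) has_integral
      \<alpha> * integral {0..1} (\<lambda>u. \<psi>' u * \<psi>' u) + (- lam) * m) {0..1}"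
    by (intro has_integral_add has_integral_mult_right energy(1) mass)
  ultimately have "\<alpha> * (\<psi>' 1 * \<psi> 1 - \<psi>' 0 * \<psi> 0) = \<alpha> * integral {0..1} (\<lambda>u. \<psi>' u * \<psi>' u) + (- lam) * m"
    by (rule has_integral_unique)
  then show "\<alpha> * (\<psi>' 1 * \<psi> 1 - \<psi>' 0 * \<psi> 0) = \<alpha> * integral {0..1} (\<lambda>u. \<psi>' u * \<psi>' u) - lam * m"
    by simp
qed

lemma eigenvalue_nonneg:
  assumes pos: "\<alpha> > 0" "\<alpha>L > 0" "\<alpha>R > 0"
    and eigen: "is_eigenfunction \<beta> \<alpha> \<alpha>L \<alpha>R lam \<psi>" and "\<psi> \<in> sq_int" and normed: "L2inner \<psi> \<psi> = 1"
  shows "lam \<ge> 0"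
proof -
  obtain \<psi>' \<psi>'' where
    d1: "\<And>u. u \<in> {0..1} \<Longrightarrow> (\<psi> has_real_derivative \<psi>' u) (at u within {0..1})" and
    d2: "\<And>u. u \<in> {0..1} \<Longrightarrow> (\<psi>' has_real_derivative \<psi>'' u) (at u within {0..1})" and
    ode: "\<And>u. u \<in> {0..1} \<Longrightarrow> - \<alpha> * \<psi>'' u = lam * \<psi> u" and
    boundary: "if \<beta> < 1 then \<psi> 0 = 0 \<and> \<psi> 1 = 0
         else if \<beta> = 1 then \<alpha> * \<psi>' 0 = \<alpha>L * \<psi> 0 \<and> - \<alpha> * \<psi>' 1 = \<alpha>R * \<psi> 1
         else \<psi>' 0 = 0 \<and> \<psi>' 1 = 0"
    using eigen unfolding is_eigenfunction_def by blast
  have "set_integrable lborel {0..1} (\<lambda>u. \<psi> u * \<psi> u)"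
    using \<open>\<psi> \<in> sq_int\<close> by (simp add: sq_int_def power2_eq_square)
  then have "((\<lambda>u. \<psi> u * \<psi> u) has_integral 1) {0..1}"
    using normed set_borel_integral_eq_integral[of "{0..1}" "\<lambda>u. \<psi> u * \<psi> u"]
    by (simp add: L2inner_def has_integral_iff)
  note energy = eigenfunction_energy_identity[OF d1 d2 ode this]
  have "0 \<le> \<alpha> * integral {0..1} (\<lambda>u. \<psi>' u * \<psi>' u)"
    using energy(1) pos(1) by simp
  then show ?thesis
    using energy(2) eigenfunction_boundary_term_nonpos[OF pos boundary] by linarith
qed

lemma suminf_minus_sum_tendsto_zero:
  fixes f :: "nat \<Rightarrow> real"
  assumes "summable f"
  shows "(\<lambda>N. suminf f - (\<Sum>n<N. f n)) \<longlonglongrightarrow> 0"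
  using tendsto_diff[OF tendsto_const summable_LIMSEQ[OF assms], of "suminf f"] by simp

lemma sum_atLeastLessThan_le_suminf_minus_sum:
  fixes f :: "nat \<Rightarrow> real"
  assumes "summable f" "\<And>n. f n \<ge> 0"
  shows "(\<Sum>n\<in>{M..<N}. f n) \<le> suminf f - (\<Sum>n<M. f n)"
proof (cases "M \<le> N")
  case True
  then have "(\<Sum>n\<in>{M..<N}. f n) = (\<Sum>n<N. f n) - (\<Sum>n<M. f n)"
    by (simp add: lessThan_atLeast0 sum_diff_nat_ivl)
  then show ?thesis
    using sum_le_suminf[OF assms(1), of "{..<N}"] assms(2) by simp
next
  case False
  then show ?thesis
    using sum_le_suminf[OF assms(1), of "{..<M}"] assms(2) by simp
qed

lemma linear_integral_equation_unique:
  fixes f :: "real \<Rightarrow> real"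
  assumes eq: "\<And>s. s \<ge> 0 \<Longrightarrow> (\<lambda>r. - l * f r) integrable_on {0..s} \<and> f s = c + integral {0..s} (\<lambda>r. - l * f r)"
    and t: "t \<ge> 0"
  shows "f t = c * exp (- l * t)"
proof -
  have f_eq: "f s = c + integral {0..s} (\<lambda>r. - l * f r)" if "s \<in> {0..t}" for s
    using eq[of s] that by auto
  have "continuous_on {0..t} (\<lambda>s. c + integral {0..s} (\<lambda>r. - l * f r))"
    using eq[OF t] by (intro continuous_intros indefinite_integral_continuous_1) auto
  then have "continuous_on {0..t} f"
    by (rule continuous_on_eq) (simp add: f_eq)
  then have cont: "continuous_on {0..t} (\<lambda>r. - l * f r)"
    by (intro continuous_intros)
  have f_deriv: "(f has_real_derivative - l * f s) (at s within {0..t})" if s: "s \<in> {0..t}" for s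
  proof (rule has_field_derivative_transform_within)
    show "((\<lambda>s. c + integral {0..s} (\<lambda>r. - l * f r)) has_real_derivative - l * f s) (at s within {0..t})"
      using DERIV_add[OF DERIV_const integral_has_real_derivative[OF cont s]] by simp
  qed (use s f_eq in \<open>auto intro: zero_less_one\<close>)
  have "((\<lambda>s. f s * exp (l * s)) has_real_derivative 0) (at s within {0..t})" if "s \<in> {0..t}" for s
    using f_deriv[OF that] by (auto intro!: derivative_eq_intros simp: algebra_simps)
  then obtain C where "\<And>s. s \<in> {0..t} \<Longrightarrow> f s * exp (l * s) = C"
    using has_field_derivative_zero_constant[of "{0..t}" "\<lambda>s. f s * exp (l * s)"] by auto
  from this[of 0] this[of t] have "f t * exp (l * t) = c"
    using t f_eq[of 0] by simp
  then show ?thesis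
    by (simp add: exp_minus field_simps)
qed

lemma abs_exp_neg_diff_le:
  fixes x y :: real
  assumes "x \<ge> 0" "y \<ge> 0"
  shows "\<bar>exp (- x) - exp (- y)\<bar> \<le> \<bar>x - y\<bar>"
proof -
  have "exp (- a) - exp (- b) \<le> b - a" if "0 \<le> a" "a \<le> b" for a b :: real
  proof -
    have "exp (- a) - exp (- b) = exp (- a) * (1 - exp (a - b))"
      by (simp add: algebra_simps flip: exp_add)
    also have "\<dots> \<le> 1 * (b - a)"
    proof (rule mult_mono)
      show "1 - exp (a - b) \<le> b - a"
        using exp_ge_add_one_self[of "a - b"] by linarith
    qed (use that in auto)
    finally show ?thesis
      by simp
  qed
  then show ?thesis
    using assms by (cases "x \<le> y") (auto simp: abs_if)
qed

section \<open>Coefficient sequences and the Riesz--Fischer theorem\<close>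

locale spectral_basis =
  fixes \<psi> :: "nat \<Rightarrow> real \<Rightarrow> real" and lam :: "nat \<Rightarrow> real"
  assumes basis_sq_int: "\<psi> n \<in> sq_int"
    and orthonormal: "L2inner (\<psi> n) (\<psi> m) = (if n = m then 1 else 0)"
    and complete: "F \<in> sq_int \<Longrightarrow> (\<And>n. L2inner F (\<psi> n) = 0) \<Longrightarrow> AE u in lborel. u \<in> {0..1} \<longrightarrow> F u = 0"
    and lam_nonneg: "lam n \<ge> 0"
begin

definition weight :: "int \<Rightarrow> nat \<Rightarrow> real" where
  "weight k n = (1 + lam n) powi k"

definition coef :: "(real \<Rightarrow> real) \<Rightarrow> nat \<Rightarrow> real" where
  "coef F n = L2inner F (\<psi> n)"

definition rapid_seq :: "(nat \<Rightarrow> real) set" where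
  "rapid_seq = {x. \<forall>k. summable (\<lambda>n. weight k n * (x n)^2)}"

definition wnorm_sq :: "int \<Rightarrow> (nat \<Rightarrow> real) \<Rightarrow> real" where
  "wnorm_sq k x = (\<Sum>n. weight k n * (x n)^2)"

lemma weight_pos: "weight k n > 0"
  using lam_nonneg[of n] by (simp add: weight_def)

lemma weight_nonneg: "weight k n \<ge> 0"
  using weight_pos[of k n] by simp

lemma weight_mono: "k \<le> k' \<Longrightarrow> weight k n \<le> weight k' n"
  unfolding weight_def using lam_nonneg[of n] by (intro power_int_increasing) auto

lemma weight_add: "weight (k + j) n = weight k n * weight j n"
  unfolding weight_def using lam_nonneg[of n] by (intro power_int_add) auto

lemma lam_sq_le_weight: "(lam n)^2 \<le> weight 2 n"
  using lam_nonneg[of n] by (simp add: weight_def power2_eq_square algebra_simps)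

lemma Snorm_sq_eq_wnorm_sq: "Snorm_sq \<psi> lam k F = wnorm_sq k (coef F)"
  by (simp add: Snorm_sq_def wnorm_sq_def weight_def coef_def)

lemma Sspace_iff: "F \<in> Sspace \<psi> lam \<longleftrightarrow> F \<in> sq_int \<and> coef F \<in> rapid_seq"
  by (simp add: Sspace_def rapid_seq_def weight_def coef_def)

lemma summable_weighted: "x \<in> rapid_seq \<Longrightarrow> summable (\<lambda>n. weight k n * (x n)^2)"
  by (simp add: rapid_seq_def)

lemma wnorm_sq_nonneg: "x \<in> rapid_seq \<Longrightarrow> wnorm_sq k x \<ge> 0"
  unfolding wnorm_sq_def by (intro suminf_nonneg summable_weighted) (auto intro: mult_nonneg_nonneg weight_nonneg)

lemma wnorm_sq_mono: "x \<in> rapid_seq \<Longrightarrow> k \<le> k' \<Longrightarrow> wnorm_sq k x \<le> wnorm_sq k' x"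
  unfolding wnorm_sq_def by (intro suminf_le summable_weighted mult_right_mono weight_mono) auto

lemma rapid_finite_support: "finite A \<Longrightarrow> (\<And>n. n \<notin> A \<Longrightarrow> x n = 0) \<Longrightarrow> x \<in> rapid_seq"
  unfolding rapid_seq_def by (auto intro!: summable_finite[of A])

lemma wnorm_sq_finite_support:
  "finite A \<Longrightarrow> (\<And>n. n \<notin> A \<Longrightarrow> x n = 0) \<Longrightarrow> wnorm_sq k x = (\<Sum>n\<in>A. weight k n * (x n)^2)"
  unfolding wnorm_sq_def by (rule suminf_finite) auto

lemma rapid_lincomb:
  assumes "x \<in> rapid_seq" "y \<in> rapid_seq"
  shows "(\<lambda>n. a * x n + b * y n) \<in> rapid_seq"
  unfolding rapid_seq_def
proof (intro CollectI allI)
  fix k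
  have "summable (\<lambda>n. 2 * a^2 * (weight k n * (x n)^2) + 2 * b^2 * (weight k n * (y n)^2))"
    using assms by (intro summable_add summable_mult summable_weighted)
  then show "summable (\<lambda>n. weight k n * (a * x n + b * y n)^2)"
  proof (rule summable_comparison_test')
    fix n
    have "(a * x n + b * y n)^2 \<le> 2 * a^2 * (x n)^2 + 2 * b^2 * (y n)^2"
      using sum_squares_bound[of "a * x n" "b * y n"] by (simp add: power2_eq_square algebra_simps)
    from mult_left_mono[OF this weight_nonneg]
    show "norm (weight k n * (a * x n + b * y n)^2)
        \<le> 2 * a^2 * (weight k n * (x n)^2) + 2 * b^2 * (weight k n * (y n)^2)"
      using weight_nonneg[of k n] by (simp add: algebra_simps)
  qed
qed

lemma rapid_diff: "x \<in> rapid_seq \<Longrightarrow> y \<in> rapid_seq \<Longrightarrow> (\<lambda>n. x n - y n) \<in> rapid_seq"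
  using rapid_lincomb[of x y 1 "-1"] by simp

lemma rapid_tail: "x \<in> rapid_seq \<Longrightarrow> (\<lambda>n. if n < N then 0 else x n) \<in> rapid_seq"
  using rapid_diff[of x "\<lambda>n. if n < N then x n else 0"] rapid_finite_support[of "{..<N}"]
  by (simp add: if_distrib cong: if_cong)

lemma weighted_mult_le:
  assumes "\<bar>m n\<bar> \<le> B"
  shows "weight k n * (m n * x n)^2 \<le> B^2 * (weight k n * (x n)^2)"
proof -
  have "(m n)^2 \<le> B^2"
    using power_mono[OF assms abs_ge_zero, of 2] by simp
  then have "(m n)^2 * (weight k n * (x n)^2) \<le> B^2 * (weight k n * (x n)^2)"
    by (rule mult_right_mono) (simp add: weight_nonneg)
  then show ?thesis
    by (simp add: power_mult_distrib mult.left_commute)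
qed

lemma rapid_mult_bounded:
  assumes "x \<in> rapid_seq" "\<And>n. \<bar>m n\<bar> \<le> B"
  shows "(\<lambda>n. m n * x n) \<in> rapid_seq"
  unfolding rapid_seq_def
proof (intro CollectI allI summable_comparison_test'[OF summable_mult[OF summable_weighted[OF assms(1)]]])
  show "norm (weight k n * (m n * x n)^2) \<le> B^2 * (weight k n * (x n)^2)" for k n
    using weighted_mult_le[OF assms(2)] weight_nonneg[of k n] by simp
qed

lemma wnorm_sq_mult_le:
  assumes "x \<in> rapid_seq" "\<And>n. \<bar>m n\<bar> \<le> 1"
  shows "wnorm_sq k (\<lambda>n. m n * x n) \<le> wnorm_sq k x"
  unfolding wnorm_sq_def
  using weighted_mult_le[of m _ 1, OF assms(2)]
  by (intro suminf_le summable_weighted rapid_mult_bounded[OF assms]) (simp_all add: assms(1))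

lemma rapid_mult_lam:
  assumes "x \<in> rapid_seq"
  shows "(\<lambda>n. - lam n * x n) \<in> rapid_seq"
  unfolding rapid_seq_def
proof (intro CollectI allI summable_comparison_test'[OF summable_weighted[OF assms]])
  fix k n
  have "(lam n)^2 * (weight k n * (x n)^2) \<le> weight 2 n * (weight k n * (x n)^2)"
    by (intro mult_right_mono lam_sq_le_weight) (simp add: weight_nonneg)
  also have "\<dots> = weight (k + 2) n * (x n)^2"
    by (simp add: weight_add)
  finally show "norm (weight k n * (- lam n * x n)^2) \<le> weight (k + 2) n * (x n)^2"
    using weight_nonneg[of k n] by (simp add: power_mult_distrib mult.left_commute)
qed

lemma wnorm_sq_tail:
  assumes "x \<in> rapid_seq"
  shows "wnorm_sq k (\<lambda>n. if n < N then 0 else x n) = wnorm_sq k x - (\<Sum>n<N. weight k n * (x n)^2)"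
proof -
  have "wnorm_sq k (\<lambda>n. if n < N then 0 else x n)
      = (\<Sum>n. weight k n * (x n)^2 - (if n < N then weight k n * (x n)^2 else 0))"
    unfolding wnorm_sq_def by (intro suminf_cong) simp
  also have "\<dots> = wnorm_sq k x - (\<Sum>n. if n < N then weight k n * (x n)^2 else 0)"
    unfolding wnorm_sq_def by (intro suminf_diff[symmetric] summable_weighted[OF assms] summable_finite[of "{..<N}"]) auto
  also have "(\<Sum>n. if n < N then weight k n * (x n)^2 else 0) = (\<Sum>n<N. weight k n * (x n)^2)"
    by (subst suminf_finite[of "{..<N}"]) auto
  finally show ?thesis .
qed

lemma wnorm_sq_tail_tendsto_zero:
  assumes "x \<in> rapid_seq"
  shows "(\<lambda>N. wnorm_sq k (\<lambda>n. if n < N then 0 else x n)) \<longlonglongrightarrow> 0"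
  using suminf_minus_sum_tendsto_zero[OF summable_weighted[OF assms, of k]]
  by (simp add: wnorm_sq_tail[OF assms] wnorm_sq_def)

definition expansion :: "(nat \<Rightarrow> real) \<Rightarrow> nat set \<Rightarrow> real \<Rightarrow> real" where
  "expansion x A = (\<lambda>u. \<Sum>n\<in>A. x n * \<psi> n u)"

lemma expansion_sq_int: "expansion x A \<in> sq_int"
  unfolding expansion_def by (intro sq_int_sum basis_sq_int)

lemma coef_expansion: "finite A \<Longrightarrow> coef (expansion x A) m = (if m \<in> A then x m else 0)"
  unfolding coef_def expansion_def
  by (simp add: L2inner_sum_left basis_sq_int orthonormal if_distrib[of "(*) _"] cong: if_cong)

lemma expansion_in_Sspace: "finite A \<Longrightarrow> expansion x A \<in> Sspace \<psi> lam"
  unfolding Sspace_iff by (auto intro!: rapid_finite_support[of A] expansion_sq_int simp: coef_expansion)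

lemma expansion_lessThan_diff:
  "M \<le> N \<Longrightarrow> (\<lambda>u. expansion x {..<N} u - expansion x {..<M} u) = expansion x {M..<N}"
  unfolding expansion_def by (auto simp: lessThan_atLeast0 sum_diff_nat_ivl)

lemma L2inner_expansion_self:
  assumes "finite A"
  shows "L2inner (expansion x A) (expansion x A) = (\<Sum>n\<in>A. (x n)^2)"
proof -
  have "L2inner (expansion x A) (expansion x A) = (\<Sum>n\<in>A. x n * L2inner (\<psi> n) (expansion x A))"
    using L2inner_sum_left[of A \<psi> "expansion x A" x, OF basis_sq_int expansion_sq_int]
    by (simp add: expansion_def)
  also have "\<dots> = (\<Sum>n\<in>A. x n * coef (expansion x A) n)"
    by (simp add: coef_def L2inner_commute)
  finally show ?thesis
    using assms by (simp add: coef_expansion power2_eq_square)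
qed

lemma coef_psi: "coef (\<psi> n) = (\<lambda>m. if m = n then 1 else 0)"
  by (auto simp: coef_def orthonormal)

lemma psi_in_Sspace: "\<psi> n \<in> Sspace \<psi> lam"
  unfolding Sspace_iff using basis_sq_int by (auto intro!: rapid_finite_support[of "{n}"] simp: coef_psi split: if_splits)

lemma coef_lincomb:
  "F \<in> sq_int \<Longrightarrow> G \<in> sq_int \<Longrightarrow> coef (\<lambda>u. a * F u + b * G u) = (\<lambda>n. a * coef F n + b * coef G n)"
  unfolding coef_def by (auto intro!: L2inner_lincomb_left basis_sq_int)

lemma coef_diff: "F \<in> sq_int \<Longrightarrow> G \<in> sq_int \<Longrightarrow> coef (\<lambda>u. F u - G u) = (\<lambda>n. coef F n - coef G n)"
  using coef_lincomb[of F G 1 "-1"] by simp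

lemma Sspace_lincomb:
  "F \<in> Sspace \<psi> lam \<Longrightarrow> G \<in> Sspace \<psi> lam \<Longrightarrow> (\<lambda>u. a * F u + b * G u) \<in> Sspace \<psi> lam"
  unfolding Sspace_iff by (simp add: coef_lincomb sq_int_lincomb rapid_lincomb)

lemma abs_coef_le: "F \<in> sq_int \<Longrightarrow> \<bar>coef F m\<bar> \<le> sqrt (L2inner F F)"
  using L2inner_Cauchy_Schwarz[OF _ basis_sq_int, of F m] by (simp add: coef_def orthonormal)

lemma Bessel_inequality:
  assumes "F \<in> sq_int"
  shows "(\<Sum>n<N. (coef F n)^2) \<le> L2inner F F"
proof -
  let ?s = "expansion (coef F) {..<N}"
  have "L2inner F ?s = (\<Sum>n<N. (coef F n)^2)"
    using assms unfolding L2inner_commute[of F] expansion_def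
    by (simp add: L2inner_sum_left basis_sq_int L2inner_commute[of "\<psi> _"] coef_def power2_eq_square)
  then have "L2inner (\<lambda>u. F u - ?s u) (\<lambda>u. F u - ?s u) = L2inner F F - (\<Sum>n<N. (coef F n)^2)"
    by (simp add: L2inner_diff_self[OF assms expansion_sq_int] L2inner_expansion_self)
  then show ?thesis
    using L2inner_self_nonneg[of "\<lambda>u. F u - ?s u"] by simp
qed

lemma summable_coef_sq: "F \<in> sq_int \<Longrightarrow> summable (\<lambda>n. (coef F n)^2)"
  by (rule summableI_nonneg_bounded[where x="L2inner F F"]) (auto intro: Bessel_inequality)

theorem Riesz_Fischer:
  assumes x: "summable (\<lambda>n. (x n)^2)"
  obtains H where "H \<in> sq_int" "coef H = x" "L2inner H H \<le> (\<Sum>n. (x n)^2)"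
proof -
  let ?s = "\<lambda>N. expansion x {..<N}" and ?T = "\<lambda>N. (\<Sum>n. (x n)^2) - (\<Sum>n<N. (x n)^2)"
  have "L2inner (\<lambda>u. ?s N u - ?s M u) (\<lambda>u. ?s N u - ?s M u) \<le> ?T M" if "M \<le> N" for M N
    using sum_atLeastLessThan_le_suminf_minus_sum[OF x, of M N]
    by (simp add: expansion_lessThan_diff[OF that] L2inner_expansion_self)
  then obtain H where H: "H \<in> sq_int" and H_dist: "\<And>N. L2inner (\<lambda>u. H u - ?s N u) (\<lambda>u. H u - ?s N u) \<le> ?T N"
    using sq_int_Cauchy_limit[of ?s ?T, OF expansion_sq_int _ suminf_minus_sum_tendsto_zero[OF x]] by blast
  have "\<bar>coef H m - x m\<bar> \<le> sqrt (?T N)" if "m < N" for m N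
  proof -
    have "coef H m - x m = coef (\<lambda>u. H u - ?s N u) m"
      using that by (simp add: coef_diff[OF H expansion_sq_int] coef_expansion)
    then show ?thesis
      using abs_coef_le[OF sq_int_diff[OF H expansion_sq_int], of x "{..<N}" m]
        real_sqrt_le_mono[OF H_dist[of N]] by linarith
  qed
  then have "\<bar>coef H m - x m\<bar> \<le> 0" for m
    using tendsto_real_sqrt[OF suminf_minus_sum_tendsto_zero[OF x]]
    by (intro LIMSEQ_le_const[where X="\<lambda>N. sqrt (?T N)"]) (auto intro!: exI[of _ "Suc m"])
  then have "coef H = x"
    by auto
  moreover have "L2inner H H \<le> (\<Sum>n. (x n)^2)"
    using H_dist[of 0] by (simp add: expansion_def)
  ultimately show ?thesis
    using H that by blast
qed

lemma L2inner_self_le_suminf_coef_sq: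
  assumes F: "F \<in> sq_int"
  shows "L2inner F F \<le> (\<Sum>n. (coef F n)^2)"
proof -
  obtain H where H: "H \<in> sq_int" "coef H = coef F" "L2inner H H \<le> (\<Sum>n. (coef F n)^2)"
    using Riesz_Fischer[OF summable_coef_sq[OF F]] by blast
  have "AE u in lborel. u \<in> {0..1} \<longrightarrow> F u - H u = 0"
    using complete[OF sq_int_diff[OF F H(1)]] coef_diff[OF F H(1)] H(2)
    by (simp add: coef_def[symmetric] fun_eq_iff)
  then have "AE u in lebesgue_01. F u * F u = H u * H u"
    by (subst AE_restrict_space_iff) auto
  then have "L2inner F F = L2inner H H"
    unfolding L2inner_eq_integral by (rule integral_cong_AE[rotated 2])
      (simp_all add: F H(1) sq_int_measurable borel_measurable_times)
  then show ?thesis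
    using H(3) by simp
qed

section \<open>The dual space\<close>

lemma Sdual_lincomb_eq:
  "d \<in> Sdual \<psi> lam \<Longrightarrow> F \<in> Sspace \<psi> lam \<Longrightarrow> G \<in> Sspace \<psi> lam \<Longrightarrow>
    d (\<lambda>u. a * F u + b * G u) = a * d F + b * d G"
  by (simp add: Sdual_def)

lemma Sdual_outside: "d \<in> Sdual \<psi> lam \<Longrightarrow> F \<notin> Sspace \<psi> lam \<Longrightarrow> d F = 0"
  by (simp add: Sdual_def)

lemma Sdual_bound:
  assumes "d \<in> Sdual \<psi> lam"
  obtains C k where "C \<ge> 0" "\<And>F. F \<in> Sspace \<psi> lam \<Longrightarrow> \<bar>d F\<bar> \<le> C * sqrt (wnorm_sq k (coef F))"
proof -
  obtain k C where kC: "\<forall>F\<in>Sspace \<psi> lam. \<bar>d F\<bar> \<le> C * sqrt (wnorm_sq k (coef F))"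
    using assms by (auto simp: Sdual_def Snorm_sq_eq_wnorm_sq)
  have "\<bar>d F\<bar> \<le> max C 0 * sqrt (wnorm_sq k (coef F))" if "F \<in> Sspace \<psi> lam" for F
  proof -
    have "C * sqrt (wnorm_sq k (coef F)) \<le> max C 0 * sqrt (wnorm_sq k (coef F))"
      using that by (intro mult_right_mono) (auto simp: Sspace_iff wnorm_sq_nonneg)
    moreover have "\<bar>d F\<bar> \<le> C * sqrt (wnorm_sq k (coef F))"
      using kC that by blast
    ultimately show ?thesis
      by linarith
  qed
  then show ?thesis
    using that[of "max C 0" k] by simp
qed

lemma SdualI:
  assumes "\<And>F G a b. F \<in> Sspace \<psi> lam \<Longrightarrow> G \<in> Sspace \<psi> lam \<Longrightarrow>
      d (\<lambda>u. a * F u + b * G u) = a * d F + b * d G"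
    and "\<And>F. F \<in> Sspace \<psi> lam \<Longrightarrow> \<bar>d F\<bar> \<le> C * sqrt (wnorm_sq k (coef F))"
    and "\<And>F. F \<notin> Sspace \<psi> lam \<Longrightarrow> d F = 0"
  shows "d \<in> Sdual \<psi> lam"
  using assms unfolding Sdual_def Snorm_sq_eq_wnorm_sq by blast

lemma Sdual_lincomb:
  assumes c: "c \<in> Sdual \<psi> lam" and d: "d \<in> Sdual \<psi> lam"
  shows "(\<lambda>F. a * c F + b * d F) \<in> Sdual \<psi> lam"
proof -
  obtain C1 k1 where C1: "C1 \<ge> 0" "\<And>F. F \<in> Sspace \<psi> lam \<Longrightarrow> \<bar>c F\<bar> \<le> C1 * sqrt (wnorm_sq k1 (coef F))"
    using Sdual_bound[OF c] by metis
  obtain C2 k2 where C2: "C2 \<ge> 0" "\<And>F. F \<in> Sspace \<psi> lam \<Longrightarrow> \<bar>d F\<bar> \<le> C2 * sqrt (wnorm_sq k2 (coef F))"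
    using Sdual_bound[OF d] by metis
  have bound: "\<bar>a * c F + b * d F\<bar> \<le> (\<bar>a\<bar> * C1 + \<bar>b\<bar> * C2) * sqrt (wnorm_sq (max k1 k2) (coef F))"
    if F: "F \<in> Sspace \<psi> lam" for F
  proof -
    have mono: "sqrt (wnorm_sq k (coef F)) \<le> sqrt (wnorm_sq (max k1 k2) (coef F))" if "k \<le> max k1 k2" for k
      using F that by (intro real_sqrt_le_mono wnorm_sq_mono) (simp_all add: Sspace_iff)
    let ?s = "sqrt (wnorm_sq (max k1 k2) (coef F))"
    have "\<bar>c F\<bar> \<le> C1 * ?s"
      using C1(2)[OF F] mult_left_mono[OF mono[of k1] C1(1)] by linarith
    moreover have "\<bar>d F\<bar> \<le> C2 * ?s"
      using C2(2)[OF F] mult_left_mono[OF mono[of k2] C2(1)] by linarith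
    ultimately have "\<bar>a\<bar> * \<bar>c F\<bar> + \<bar>b\<bar> * \<bar>d F\<bar> \<le> \<bar>a\<bar> * (C1 * ?s) + \<bar>b\<bar> * (C2 * ?s)"
      by (intro add_mono mult_left_mono abs_ge_zero)
    moreover have "\<bar>a * c F + b * d F\<bar> \<le> \<bar>a\<bar> * \<bar>c F\<bar> + \<bar>b\<bar> * \<bar>d F\<bar>"
      using abs_triangle_ineq[of "a * c F" "b * d F"] by (simp add: abs_mult)
    ultimately show ?thesis
      by (simp add: algebra_simps)
  qed
  show ?thesis
  proof (rule SdualI[OF _ bound])
    show "a * c (\<lambda>u. a' * F u + b' * G u) + b * d (\<lambda>u. a' * F u + b' * G u)
        = a' * (a * c F + b * d F) + b' * (a * c G + b * d G)"
      if "F \<in> Sspace \<psi> lam" "G \<in> Sspace \<psi> lam" for F G a' b'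
      unfolding Sdual_lincomb_eq[OF c that] Sdual_lincomb_eq[OF d that] by (simp add: algebra_simps)
  qed (use Sdual_outside[OF c] Sdual_outside[OF d] in auto)
qed

lemma Sdual_restrict_L2inner:
  assumes h: "h \<in> sq_int"
  shows "(\<lambda>F. if F \<in> Sspace \<psi> lam then L2inner F h else 0) \<in> Sdual \<psi> lam"
proof (rule SdualI)
  show "\<bar>if F \<in> Sspace \<psi> lam then L2inner F h else 0\<bar> \<le> sqrt (L2inner h h) * sqrt (wnorm_sq 0 (coef F))"
    if F: "F \<in> Sspace \<psi> lam" for F
  proof -
    have "\<bar>L2inner F h\<bar> \<le> sqrt (L2inner F F) * sqrt (L2inner h h)"
      using F h by (intro L2inner_Cauchy_Schwarz) (simp_all add: Sspace_iff)
    also have "\<dots> \<le> sqrt (wnorm_sq 0 (coef F)) * sqrt (L2inner h h)"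
      using F L2inner_self_le_suminf_coef_sq[of F]
      by (intro mult_right_mono) (simp_all add: Sspace_iff wnorm_sq_def weight_def L2inner_self_nonneg)
    finally show ?thesis
      using F by (simp add: mult.commute)
  qed
next
  show "(if (\<lambda>u. a * F u + b * G u) \<in> Sspace \<psi> lam then L2inner (\<lambda>u. a * F u + b * G u) h else 0)
      = a * (if F \<in> Sspace \<psi> lam then L2inner F h else 0) + b * (if G \<in> Sspace \<psi> lam then L2inner G h else 0)"
    if "F \<in> Sspace \<psi> lam" "G \<in> Sspace \<psi> lam" for F G a b
    using that Sspace_lincomb[OF that] h L2inner_lincomb_left[of F G h a b]
    by (simp add: Sspace_iff)
qed simp

lemma Sdual_zero: "d \<in> Sdual \<psi> lam \<Longrightarrow> d (\<lambda>u. 0) = 0"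
  using Sdual_lincomb_eq[OF _ psi_in_Sspace psi_in_Sspace, of d 0 0 0 0] by simp

lemma Sdual_expansion:
  assumes d: "d \<in> Sdual \<psi> lam" and "finite A"
  shows "d (expansion x A) = (\<Sum>n\<in>A. x n * d (\<psi> n))"
  using \<open>finite A\<close>
proof (induction A rule: finite_induct)
  case empty
  then show ?case
    using Sdual_zero[OF d] by (simp add: expansion_def)
next
  case (insert n A)
  have "d (expansion x (insert n A)) = d (\<lambda>u. x n * \<psi> n u + 1 * expansion x A u)"
    using insert(1,2) by (intro arg_cong[where f=d]) (simp add: expansion_def)
  also have "\<dots> = x n * d (\<psi> n) + 1 * d (expansion x A)"
    by (rule Sdual_lincomb_eq[OF d psi_in_Sspace expansion_in_Sspace[OF insert(1)]])
  finally show ?case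
    using insert by simp
qed

lemma abs_Sdual_expansion_le:
  assumes d: "d \<in> Sdual \<psi> lam" and "finite A"
    and bound: "\<And>F. F \<in> Sspace \<psi> lam \<Longrightarrow> \<bar>d F\<bar> \<le> C * sqrt (wnorm_sq k (coef F))"
  shows "\<bar>\<Sum>n\<in>A. x n * d (\<psi> n)\<bar> \<le> C * sqrt (\<Sum>n\<in>A. weight k n * (x n)^2)"
  using bound[OF expansion_in_Sspace[OF \<open>finite A\<close>, of x]] \<open>finite A\<close>
  by (simp add: Sdual_expansion[OF d] wnorm_sq_finite_support[of A] coef_expansion cong: if_cong)

definition dual_pairing :: "((real \<Rightarrow> real) \<Rightarrow> real) \<Rightarrow> (nat \<Rightarrow> real) \<Rightarrow> real" where
  "dual_pairing d x = (\<Sum>n. x n * d (\<psi> n))"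

lemma summable_dual_pairing:
  assumes d: "d \<in> Sdual \<psi> lam" and x: "x \<in> rapid_seq"
  shows "summable (\<lambda>n. x n * d (\<psi> n))"
proof -
  obtain C k where C: "C \<ge> 0" and bound: "\<And>F. F \<in> Sspace \<psi> lam \<Longrightarrow> \<bar>d F\<bar> \<le> C * sqrt (wnorm_sq k (coef F))"
    using Sdual_bound[OF d] by metis
  let ?T = "\<lambda>m. wnorm_sq k x - (\<Sum>n<m. weight k n * (x n)^2)"
  show ?thesis
  proof (rule summable_Cauchy')
    have "(\<lambda>m. sqrt (?T m)) \<longlonglongrightarrow> 0"
      using tendsto_real_sqrt[OF suminf_minus_sum_tendsto_zero[OF summable_weighted[OF x]]]
      by (simp add: wnorm_sq_def)
    then show "(\<lambda>m. C * sqrt (?T m)) \<longlonglongrightarrow> 0"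
      by (rule tendsto_mult_right_zero)
    have "norm (\<Sum>n\<in>{m..<n'}. x n * d (\<psi> n)) \<le> C * sqrt (?T m)" for m n'
    proof -
      have "(\<Sum>n\<in>{m..<n'}. weight k n * (x n)^2) \<le> ?T m"
        unfolding wnorm_sq_def
        by (intro sum_atLeastLessThan_le_suminf_minus_sum summable_weighted[OF x]) (simp add: weight_nonneg)
      then have "C * sqrt (\<Sum>n\<in>{m..<n'}. weight k n * (x n)^2) \<le> C * sqrt (?T m)"
        using C by (intro mult_left_mono real_sqrt_le_mono)
      then show ?thesis
        using abs_Sdual_expansion_le[OF d _ bound, of "{m..<n'}" x] by simp
    qed
    then show "eventually (\<lambda>m. \<forall>n'\<ge>m. norm (\<Sum>n\<in>{m..<n'}. x n * d (\<psi> n)) \<le> C * sqrt (?T m)) sequentially"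
      by simp
  qed
qed

lemma dual_pairing_bound:
  assumes d: "d \<in> Sdual \<psi> lam" and x: "x \<in> rapid_seq"
    and bound: "\<And>F. F \<in> Sspace \<psi> lam \<Longrightarrow> \<bar>d F\<bar> \<le> C * sqrt (wnorm_sq k (coef F))" and C: "C \<ge> 0"
  shows "\<bar>dual_pairing d x\<bar> \<le> C * sqrt (wnorm_sq k x)"
proof (rule LIMSEQ_le_const2)
  show "(\<lambda>N. \<bar>\<Sum>n<N. x n * d (\<psi> n)\<bar>) \<longlonglongrightarrow> \<bar>dual_pairing d x\<bar>"
    unfolding dual_pairing_def by (intro tendsto_rabs summable_LIMSEQ summable_dual_pairing d x)
  have "\<bar>\<Sum>n<N. x n * d (\<psi> n)\<bar> \<le> C * sqrt (wnorm_sq k x)" for N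
  proof -
    have "(\<Sum>n<N. weight k n * (x n)^2) \<le> wnorm_sq k x"
      unfolding wnorm_sq_def by (intro sum_le_suminf summable_weighted[OF x]) (auto simp: weight_nonneg)
    then have "C * sqrt (\<Sum>n<N. weight k n * (x n)^2) \<le> C * sqrt (wnorm_sq k x)"
      using C by (intro mult_left_mono real_sqrt_le_mono)
    then show ?thesis
      using abs_Sdual_expansion_le[OF d _ bound, of "{..<N}" x] by simp
  qed
  then show "\<exists>N. \<forall>n\<ge>N. \<bar>\<Sum>n<n. x n * d (\<psi> n)\<bar> \<le> C * sqrt (wnorm_sq k x)"
    by blast
qed

lemma dual_pairing_lincomb:
  assumes d: "d \<in> Sdual \<psi> lam" and "x \<in> rapid_seq" "y \<in> rapid_seq"
  shows "dual_pairing d (\<lambda>n. a * x n + b * y n) = a * dual_pairing d x + b * dual_pairing d y"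
proof -
  have "(\<lambda>n. (a * x n + b * y n) * d (\<psi> n)) = (\<lambda>n. a * (x n * d (\<psi> n)) + b * (y n * d (\<psi> n)))"
    by (simp add: algebra_simps)
  then show ?thesis
    unfolding dual_pairing_def using summable_dual_pairing[OF d] assms(2,3)
    by (simp add: suminf_add[symmetric] suminf_mult summable_mult)
qed

lemma dual_pairing_finite_support:
  assumes "\<And>n. n \<ge> N \<Longrightarrow> x n = 0"
  shows "dual_pairing d x = (\<Sum>n<N. x n * d (\<psi> n))"
  unfolding dual_pairing_def using assms by (intro suminf_finite) auto

lemma dual_pairing_minus_sum:
  assumes d: "d \<in> Sdual \<psi> lam" and x: "x \<in> rapid_seq"
  shows "dual_pairing d x - (\<Sum>n<N. x n * d (\<psi> n)) = dual_pairing d (\<lambda>n. if n < N then 0 else x n)"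
proof -
  have "dual_pairing d (\<lambda>n. if n < N then x n else 0) = (\<Sum>n<N. x n * d (\<psi> n))"
    by (subst dual_pairing_finite_support[of N]) auto
  moreover have "(\<lambda>n. if n < N then 0 else x n) = (\<lambda>n. 1 * x n + (-1) * (if n < N then x n else 0))"
    by auto
  ultimately show ?thesis
    using dual_pairing_lincomb[OF d x rapid_finite_support[of "{..<N}"], of "\<lambda>n. if n < N then x n else 0" 1 "-1"]
    by simp
qed

lemma Sdual_eq_dual_pairing:
  assumes d: "d \<in> Sdual \<psi> lam" and F: "F \<in> Sspace \<psi> lam"
  shows "d F = dual_pairing d (coef F)"
proof -
  obtain C k where "C \<ge> 0" and bound: "\<And>F. F \<in> Sspace \<psi> lam \<Longrightarrow> \<bar>d F\<bar> \<le> C * sqrt (wnorm_sq k (coef F))"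
    using Sdual_bound[OF d] by metis
  have F': "F \<in> sq_int" "coef F \<in> rapid_seq"
    using F by (simp_all add: Sspace_iff)
  have remainder: "\<bar>d F - (\<Sum>n<N. coef F n * d (\<psi> n))\<bar> \<le> C * sqrt (wnorm_sq k (\<lambda>n. if n < N then 0 else coef F n))"
    for N
  proof -
    let ?G = "\<lambda>u. 1 * F u + (-1) * expansion (coef F) {..<N} u"
    have "d ?G = 1 * d F + (-1) * d (expansion (coef F) {..<N})"
      by (rule Sdual_lincomb_eq[OF d F expansion_in_Sspace]) simp
    then have "d F - (\<Sum>n<N. coef F n * d (\<psi> n)) = d ?G"
      by (simp add: Sdual_expansion[OF d])
    moreover have "?G \<in> Sspace \<psi> lam"
      by (rule Sspace_lincomb[OF F expansion_in_Sspace]) simp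
    moreover have "coef ?G = (\<lambda>n. if n < N then 0 else coef F n)"
      unfolding coef_lincomb[OF F'(1) expansion_sq_int] by (simp add: coef_expansion fun_eq_iff)
    ultimately show ?thesis
      using bound[of ?G] by simp
  qed
  then have "\<forall>N. norm (d F - (\<Sum>n<N. coef F n * d (\<psi> n)))
      \<le> C * sqrt (wnorm_sq k (\<lambda>n. if n < N then 0 else coef F n))"
    by simp
  moreover have "(\<lambda>N. sqrt (wnorm_sq k (\<lambda>n. if n < N then 0 else coef F n))) \<longlonglongrightarrow> 0"
    using tendsto_real_sqrt[OF wnorm_sq_tail_tendsto_zero[OF F'(2)]] by simp
  then have "(\<lambda>N. C * sqrt (wnorm_sq k (\<lambda>n. if n < N then 0 else coef F n))) \<longlonglongrightarrow> 0"
    by (rule tendsto_mult_right_zero)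
  ultimately have "(\<lambda>N. d F - (\<Sum>n<N. coef F n * d (\<psi> n))) \<longlonglongrightarrow> 0"
    by (rule Lim_null_comparison[OF always_eventually])
  from tendsto_diff[OF tendsto_const[of "d F"] this] have "(\<lambda>n. coef F n * d (\<psi> n)) sums d F"
    by (simp add: sums_def)
  then show ?thesis
    by (simp add: dual_pairing_def sums_iff)
qed

lemma Sdual_eqI:
  assumes d: "d \<in> Sdual \<psi> lam" and d': "d' \<in> Sdual \<psi> lam"
    and agree: "\<And>n. d (\<psi> n) = d' (\<psi> n)" and F: "F \<in> Sspace \<psi> lam"
  shows "d F = d' F"
proof -
  have "d F = dual_pairing d (coef F)"
    by (rule Sdual_eq_dual_pairing[OF d F])
  also have "\<dots> = dual_pairing d' (coef F)"
    by (simp add: dual_pairing_def agree)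
  also have "\<dots> = d' F"
    by (rule Sdual_eq_dual_pairing[OF d' F, symmetric])
  finally show ?thesis .
qed

lemma opA_in_Sspace_coef:
  assumes G: "G \<in> Sspace \<psi> lam"
  shows "opA \<psi> lam G \<in> Sspace \<psi> lam" "coef (opA \<psi> lam G) = (\<lambda>n. - lam n * coef G n)"
proof -
  have x: "(\<lambda>n. - lam n * coef G n) \<in> rapid_seq"
    using G by (intro rapid_mult_lam) (simp add: Sspace_iff)
  then obtain H where H: "H \<in> sq_int" "coef H = (\<lambda>n. - lam n * coef G n)"
    using Riesz_Fischer[of "\<lambda>n. - lam n * coef G n"] summable_weighted[OF x, of 0] by (auto simp: weight_def)
  then have "H \<in> Sspace \<psi> lam \<and> (\<forall>n. L2inner H (\<psi> n) = - lam n * L2inner G (\<psi> n))"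
    using x by (simp add: Sspace_iff coef_def[symmetric])
  then have "\<exists>H. H \<in> Sspace \<psi> lam \<and> (\<forall>n. L2inner H (\<psi> n) = - lam n * L2inner G (\<psi> n))"
    by blast
  from someI_ex[OF this] show "opA \<psi> lam G \<in> Sspace \<psi> lam" "coef (opA \<psi> lam G) = (\<lambda>n. - lam n * coef G n)"
    unfolding opA_def by (auto simp: coef_def)
qed

lemma Sdual_opA_psi:
  assumes d: "d \<in> Sdual \<psi> lam"
  shows "d (opA \<psi> lam (\<psi> n)) = - lam n * d (\<psi> n)"
proof -
  have "d (opA \<psi> lam (\<psi> n)) = dual_pairing d (\<lambda>m. - lam m * coef (\<psi> n) m)"
    using Sdual_eq_dual_pairing[OF d opA_in_Sspace_coef(1)[OF psi_in_Sspace]]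
    by (simp add: opA_in_Sspace_coef(2)[OF psi_in_Sspace])
  also have "\<dots> = - lam n * d (\<psi> n)"
    by (subst dual_pairing_finite_support[of "Suc n"]) (auto simp: coef_psi)
  finally show ?thesis .
qed

section \<open>The heat semigroup and weak solutions\<close>

definition heat_semigroup :: "((real \<Rightarrow> real) \<Rightarrow> real) \<Rightarrow> real \<Rightarrow> (real \<Rightarrow> real) \<Rightarrow> real" where
  "heat_semigroup d t F =
     (if F \<in> Sspace \<psi> lam then dual_pairing d (\<lambda>n. exp (- lam n * t) * coef F n) else 0)"

lemma abs_exp_neg_lam_le_1: "t \<ge> 0 \<Longrightarrow> \<bar>exp (- lam n * t)\<bar> \<le> 1"
  using lam_nonneg[of n] by simp

lemma rapid_exp_mult: "t \<ge> 0 \<Longrightarrow> x \<in> rapid_seq \<Longrightarrow> (\<lambda>n. exp (- lam n * t) * x n) \<in> rapid_seq"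
  by (rule rapid_mult_bounded[OF _ abs_exp_neg_lam_le_1])

lemma heat_semigroup_Sdual:
  assumes d: "d \<in> Sdual \<psi> lam" and t: "t \<ge> 0"
  shows "heat_semigroup d t \<in> Sdual \<psi> lam"
proof -
  obtain C k where C: "C \<ge> 0" and bound: "\<And>F. F \<in> Sspace \<psi> lam \<Longrightarrow> \<bar>d F\<bar> \<le> C * sqrt (wnorm_sq k (coef F))"
    using Sdual_bound[OF d] by metis
  have semigroup_bound: "\<bar>heat_semigroup d t F\<bar> \<le> C * sqrt (wnorm_sq k (coef F))" if F: "F \<in> Sspace \<psi> lam" for F
  proof -
    have x: "coef F \<in> rapid_seq"
      using F by (simp add: Sspace_iff)
    have "\<bar>heat_semigroup d t F\<bar> \<le> C * sqrt (wnorm_sq k (\<lambda>n. exp (- lam n * t) * coef F n))"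
      using F dual_pairing_bound[OF d rapid_exp_mult[OF t x] bound C] by (simp add: heat_semigroup_def)
    also have "\<dots> \<le> C * sqrt (wnorm_sq k (coef F))"
      using C x t by (intro mult_left_mono real_sqrt_le_mono wnorm_sq_mult_le abs_exp_neg_lam_le_1)
    finally show ?thesis .
  qed
  show ?thesis
  proof (rule SdualI[OF _ semigroup_bound])
    fix F G a b
    assume F: "F \<in> Sspace \<psi> lam" and G: "G \<in> Sspace \<psi> lam"
    then have "(\<lambda>n. exp (- lam n * t) * coef (\<lambda>u. a * F u + b * G u) n)
        = (\<lambda>n. a * (exp (- lam n * t) * coef F n) + b * (exp (- lam n * t) * coef G n))"
      by (simp add: coef_lincomb Sspace_iff algebra_simps)
    then show "heat_semigroup d t (\<lambda>u. a * F u + b * G u) = a * heat_semigroup d t F + b * heat_semigroup d t G"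
      using F G Sspace_lincomb[OF F G]
        dual_pairing_lincomb[OF d rapid_exp_mult[OF t] rapid_exp_mult[OF t], of "coef F" "coef G"]
      by (simp add: heat_semigroup_def Sspace_iff)
  qed (auto simp: heat_semigroup_def)
qed

lemma dual_pairing_exp_uniform_limit:
  assumes d: "d \<in> Sdual \<psi> lam" and x: "x \<in> rapid_seq"
  shows "uniform_limit {0..} (\<lambda>N s. \<Sum>n<N. exp (- lam n * s) * x n * d (\<psi> n))
           (\<lambda>s. dual_pairing d (\<lambda>n. exp (- lam n * s) * x n)) sequentially"
proof (rule uniform_limitI)
  fix e :: real
  assume "e > 0"
  obtain C k where C: "C \<ge> 0" and bound: "\<And>F. F \<in> Sspace \<psi> lam \<Longrightarrow> \<bar>d F\<bar> \<le> C * sqrt (wnorm_sq k (coef F))"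
    using Sdual_bound[OF d] by metis
  let ?tail = "\<lambda>N. wnorm_sq k (\<lambda>n. if n < N then 0 else x n)"
  have "(\<lambda>N. sqrt (?tail N)) \<longlonglongrightarrow> 0"
    using tendsto_real_sqrt[OF wnorm_sq_tail_tendsto_zero[OF x]] by simp
  have remainder: "dist (\<Sum>n<N. exp (- lam n * s) * x n * d (\<psi> n)) (dual_pairing d (\<lambda>n. exp (- lam n * s) * x n))
      \<le> C * sqrt (?tail N)" if s: "s \<in> {0..}" for N s
  proof -
    let ?y = "\<lambda>n. exp (- lam n * s) * x n"
    have s: "s \<ge> 0"
      using s by simp
    have "\<bar>dual_pairing d ?y - (\<Sum>n<N. ?y n * d (\<psi> n))\<bar> \<le> C * sqrt (wnorm_sq k (\<lambda>n. if n < N then 0 else ?y n))"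
      unfolding dual_pairing_minus_sum[OF d rapid_exp_mult[OF s x]]
      by (intro dual_pairing_bound[OF d _ bound C] rapid_tail rapid_exp_mult[OF s x])
    also have "(\<lambda>n. if n < N then 0 else ?y n) = (\<lambda>n. exp (- lam n * s) * (if n < N then 0 else x n))"
      by auto
    also have "C * sqrt (wnorm_sq k \<dots>) \<le> C * sqrt (?tail N)"
      using C s x by (intro mult_left_mono real_sqrt_le_mono wnorm_sq_mult_le rapid_tail abs_exp_neg_lam_le_1)
    finally show ?thesis
      by (simp add: dist_real_def abs_minus_commute)
  qed
  from tendsto_mult_right_zero[OF \<open>(\<lambda>N. sqrt (?tail N)) \<longlonglongrightarrow> 0\<close>, of C]
  have "eventually (\<lambda>N. C * sqrt (?tail N) < e) sequentially"
    using \<open>e > 0\<close> by (rule order_tendstoD(2))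
  then show "eventually (\<lambda>N. \<forall>s\<in>{0..}. dist (\<Sum>n<N. exp (- lam n * s) * x n * d (\<psi> n))
      (dual_pairing d (\<lambda>n. exp (- lam n * s) * x n)) < e) sequentially"
    by eventually_elim (use remainder in \<open>blast intro: le_less_trans\<close>)
qed

lemma heat_semigroup_opA_has_integral:
  assumes d: "d \<in> Sdual \<psi> lam" and G: "G \<in> Sspace \<psi> lam" and t: "t \<ge> 0"
  shows "((\<lambda>s. heat_semigroup d s (opA \<psi> lam G)) has_integral (heat_semigroup d t G - d G)) {0..t}"
proof -
  define b where "b = coef G"
  have b: "b \<in> rapid_seq"
    using G by (simp add: Sspace_iff b_def)
  define \<phi> where "\<phi> N s = (\<Sum>n<N. exp (- lam n * s) * (- lam n * b n) * d (\<psi> n))" for N s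
  have lim: "uniform_limit {0..t} \<phi> (\<lambda>s. heat_semigroup d s (opA \<psi> lam G)) sequentially"
    unfolding \<phi>_def heat_semigroup_def
    using uniform_limit_on_subset[OF dual_pairing_exp_uniform_limit[OF d rapid_mult_lam[OF b]], of "{0..t}"]
    by (simp add: opA_in_Sspace_coef[OF G] b_def)
  have cont: "continuous_on {0..t} (\<phi> N)" for N
    unfolding \<phi>_def by (intro continuous_intros)
  obtain I J where I: "\<And>N. (\<phi> N has_integral I N) {0..t}"
    and J: "((\<lambda>s. heat_semigroup d s (opA \<psi> lam G)) has_integral J) {0..t}" and "I \<longlonglongrightarrow> J"
    by (rule uniform_limit_integral[OF lim cont]) auto
  have \<phi>_integral: "(\<phi> N has_integral (\<Sum>n<N. (exp (- lam n * t) * b n - b n) * d (\<psi> n))) {0..t}" for N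
    unfolding \<phi>_def
  proof (intro has_integral_sum finite_lessThan)
    fix n
    have "((\<lambda>s. exp (- lam n * s) * b n * d (\<psi> n)) has_vector_derivative
        exp (- lam n * s) * (- lam n * b n) * d (\<psi> n)) (at s within {0..t})" for s
      unfolding has_real_derivative_iff_has_vector_derivative[symmetric]
      by (auto intro!: derivative_eq_intros simp: algebra_simps)
    from fundamental_theorem_of_calculus[OF t this]
    show "((\<lambda>s. exp (- lam n * s) * (- lam n * b n) * d (\<psi> n)) has_integral
        (exp (- lam n * t) * b n - b n) * d (\<psi> n)) {0..t}"
      by (simp add: algebra_simps)
  qed
  then have "I = (\<lambda>N. (\<Sum>n<N. exp (- lam n * t) * b n * d (\<psi> n)) - (\<Sum>n<N. b n * d (\<psi> n)))"
    using has_integral_unique[OF I] by (simp add: fun_eq_iff sum_subtractf left_diff_distrib)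
  moreover have "heat_semigroup d t G - d G = dual_pairing d (\<lambda>n. exp (- lam n * t) * b n) - dual_pairing d b"
    using G by (simp add: heat_semigroup_def Sdual_eq_dual_pairing[OF d G] b_def)
  ultimately have "I \<longlonglongrightarrow> heat_semigroup d t G - d G"
    unfolding dual_pairing_def
    by (simp only:) (intro tendsto_diff summable_LIMSEQ summable_dual_pairing[OF d] rapid_exp_mult[OF t b] b)
  then have "J = heat_semigroup d t G - d G"
    using \<open>I \<longlonglongrightarrow> J\<close> LIMSEQ_unique by blast
  then show ?thesis
    using J by simp
qed

lemma wnorm_sq_mult_le_lam:
  assumes x: "x \<in> rapid_seq" and m: "\<And>n. \<bar>m n\<bar> \<le> c * lam n"
  shows "wnorm_sq k (\<lambda>n. m n * x n) \<le> c^2 * wnorm_sq (k + 2) x"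
proof -
  have "weight k n * (m n * x n)^2 \<le> c^2 * (weight (k + 2) n * (x n)^2)" for n
  proof -
    have "(m n)^2 \<le> c^2 * (lam n)^2"
      using power_mono[OF m abs_ge_zero, of n 2] by (simp add: power_mult_distrib)
    also have "\<dots> \<le> c^2 * weight 2 n"
      by (intro mult_left_mono lam_sq_le_weight) simp
    finally have "weight k n * (m n)^2 * (x n)^2 \<le> weight k n * (c^2 * weight 2 n) * (x n)^2"
      by (intro mult_right_mono mult_left_mono weight_nonneg) simp_all
    then show ?thesis
      by (simp add: weight_add algebra_simps)
  qed
  moreover have "summable (\<lambda>n. weight k n * (m n * x n)^2)"
  proof (rule summable_comparison_test')
    show "summable (\<lambda>n. c^2 * (weight (k + 2) n * (x n)^2))"
      by (intro summable_mult summable_weighted[OF x])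
  qed (use calculation weight_nonneg in simp)
  ultimately show ?thesis
    unfolding wnorm_sq_def
    by (subst suminf_mult[OF summable_weighted[OF x], symmetric]) (intro suminf_le summable_mult summable_weighted[OF x])
qed

lemma heat_semigroup_Lipschitz:
  assumes d: "d \<in> Sdual \<psi> lam" and F: "F \<in> Sspace \<psi> lam" and t: "t \<ge> 0" "t' \<ge> 0"
    and C: "C \<ge> 0" and bound: "\<And>F. F \<in> Sspace \<psi> lam \<Longrightarrow> \<bar>d F\<bar> \<le> C * sqrt (wnorm_sq k (coef F))"
  shows "\<bar>heat_semigroup d t F - heat_semigroup d t' F\<bar> \<le> C * \<bar>t - t'\<bar> * sqrt (wnorm_sq (k + 2) (coef F))"
proof -
  define m where "m n = exp (- lam n * t) - exp (- lam n * t')" for n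
  have x: "coef F \<in> rapid_seq"
    using F by (simp add: Sspace_iff)
  have m: "\<bar>m n\<bar> \<le> \<bar>t - t'\<bar> * lam n" for n
  proof -
    have "\<bar>lam n * t - lam n * t'\<bar> = \<bar>t - t'\<bar> * lam n"
      using lam_nonneg[of n] by (simp add: right_diff_distrib[symmetric] abs_mult)
    then show ?thesis
      using abs_exp_neg_diff_le[of "lam n * t" "lam n * t'"] lam_nonneg[of n] t by (simp add: m_def)
  qed
  have mx: "(\<lambda>n. m n * coef F n) \<in> rapid_seq"
    unfolding m_def using rapid_exp_mult[OF t(1) x] rapid_exp_mult[OF t(2) x]
    by (auto dest: rapid_diff simp: left_diff_distrib)
  have "heat_semigroup d t F - heat_semigroup d t' F = dual_pairing d (\<lambda>n. m n * coef F n)"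
    using F dual_pairing_lincomb[OF d rapid_exp_mult[OF t(1) x] rapid_exp_mult[OF t(2) x], of 1 "-1"]
    by (simp add: heat_semigroup_def m_def left_diff_distrib)
  also have "\<bar>\<dots>\<bar> \<le> C * sqrt (wnorm_sq k (\<lambda>n. m n * coef F n))"
    by (rule dual_pairing_bound[OF d mx bound C])
  also have "\<dots> \<le> C * sqrt (\<bar>t - t'\<bar>^2 * wnorm_sq (k + 2) (coef F))"
    using C by (intro mult_left_mono real_sqrt_le_mono wnorm_sq_mult_le_lam[OF x m])
  finally show ?thesis
    by (simp add: real_sqrt_mult mult.assoc)
qed

lemma strong_cont_path_heat_semigroup:
  assumes d: "d \<in> Sdual \<psi> lam"
  shows "strong_cont_path \<psi> lam (heat_semigroup d)"
  unfolding strong_cont_path_def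
proof (intro conjI allI impI)
  show "heat_semigroup d t \<in> Sdual \<psi> lam" if "t \<ge> 0" for t
    by (rule heat_semigroup_Sdual[OF d that])
  fix B :: "(real \<Rightarrow> real) set" and t0 e :: real
  assume B: "S_bounded \<psi> lam B" and t0: "t0 \<ge> 0" and e: "e > 0"
  obtain C k where C: "C \<ge> 0" and bound: "\<And>F. F \<in> Sspace \<psi> lam \<Longrightarrow> \<bar>d F\<bar> \<le> C * sqrt (wnorm_sq k (coef F))"
    using Sdual_bound[OF d] by metis
  have "\<exists>M. \<forall>F\<in>B. wnorm_sq (k + 2) (coef F) \<le> M"
    using B by (simp add: S_bounded_def Snorm_sq_eq_wnorm_sq)
  then obtain M where M: "\<And>F. F \<in> B \<Longrightarrow> wnorm_sq (k + 2) (coef F) \<le> M"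
    by blast
  define K where "K = C * sqrt (max M 0)"
  have K: "K \<ge> 0"
    using C by (simp add: K_def)
  have "\<bar>heat_semigroup d t F - heat_semigroup d t0 F\<bar> < e"
    if t: "t \<ge> 0" "\<bar>t - t0\<bar> < e / (K + 1)" and F: "F \<in> B" for t F
  proof -
    have "sqrt (wnorm_sq (k + 2) (coef F)) \<le> sqrt (max M 0)"
      using M[OF F] by simp
    then have "C * \<bar>t - t0\<bar> * sqrt (wnorm_sq (k + 2) (coef F)) \<le> C * \<bar>t - t0\<bar> * sqrt (max M 0)"
      using C by (intro mult_left_mono) simp_all
    also have "\<dots> = K * \<bar>t - t0\<bar>"
      by (simp add: K_def)
    also have "\<dots> \<le> K * (e / (K + 1))"
      using t K by (intro mult_left_mono) auto
    also have "\<dots> < e"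
      using e K by (simp add: field_simps)
    finally have "C * \<bar>t - t0\<bar> * sqrt (wnorm_sq (k + 2) (coef F)) < e" .
    moreover have "F \<in> Sspace \<psi> lam"
      using F B by (auto simp: S_bounded_def)
    ultimately show ?thesis
      using heat_semigroup_Lipschitz[OF d _ t(1) t0 C bound, of F] by linarith
  qed
  moreover have "e / (K + 1) > 0"
    using e K by simp
  ultimately show "\<exists>\<delta>>0. \<forall>t\<ge>0. \<bar>t - t0\<bar> < \<delta> \<longrightarrow> (\<forall>F\<in>B. \<bar>heat_semigroup d t F - heat_semigroup d t0 F\<bar> < e)"
    by blast
qed

definition weak_solution :: "((real \<Rightarrow> real) \<Rightarrow> real) \<Rightarrow> (real \<Rightarrow> (real \<Rightarrow> real) \<Rightarrow> real) \<Rightarrow> bool" where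
  "weak_solution d g \<longleftrightarrow>
     (\<forall>t\<ge>0. g t \<in> Sdual \<psi> lam)
   \<and> (\<forall>G\<in>Sspace \<psi> lam. \<forall>t\<ge>0. (\<lambda>s. g s (opA \<psi> lam G)) integrable_on {0..t}
        \<and> g t G = d G + integral {0..t} (\<lambda>s. g s (opA \<psi> lam G)))"

lemma weak_solution_heat_semigroup:
  assumes d: "d \<in> Sdual \<psi> lam"
  shows "weak_solution d (heat_semigroup d)"
  unfolding weak_solution_def
  using heat_semigroup_Sdual[OF d] heat_semigroup_opA_has_integral[OF d]
  by (auto simp: has_integral_iff)

lemma weak_solution_psi:
  assumes g: "weak_solution d g" and t: "t \<ge> 0"
  shows "g t (\<psi> n) = d (\<psi> n) * exp (- lam n * t)"
proof (rule linear_integral_equation_unique[OF _ t])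
  fix s :: real
  assume s: "s \<ge> 0"
  have opA_psi: "g r (opA \<psi> lam (\<psi> n)) = - lam n * g r (\<psi> n)" if "r \<in> {0..s}" for r
    using g that by (intro Sdual_opA_psi) (auto simp: weak_solution_def)
  have "(\<lambda>r. g r (opA \<psi> lam (\<psi> n))) integrable_on {0..s}"
    "g s (\<psi> n) = d (\<psi> n) + integral {0..s} (\<lambda>r. g r (opA \<psi> lam (\<psi> n)))"
    using g s psi_in_Sspace[of n] by (auto simp: weak_solution_def)
  then show "(\<lambda>r. - lam n * g r (\<psi> n)) integrable_on {0..s} \<and>
      g s (\<psi> n) = d (\<psi> n) + integral {0..s} (\<lambda>r. - lam n * g r (\<psi> n))"
    using integrable_cong[of "{0..s}", OF opA_psi] integral_cong[of "{0..s}", OF opA_psi] by simp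
qed

lemma weak_solution_unique:
  assumes g: "weak_solution d g" and g': "weak_solution d g'" and t: "t \<ge> 0" and G: "G \<in> Sspace \<psi> lam"
  shows "g t G = g' t G"
proof (rule Sdual_eqI[OF _ _ _ G])
  show "g t \<in> Sdual \<psi> lam" "g' t \<in> Sdual \<psi> lam"
    using g g' t by (simp_all add: weak_solution_def)
  show "g t (\<psi> n) = g' t (\<psi> n)" for n
    unfolding weak_solution_psi[OF g t] weak_solution_psi[OF g' t] ..
qed

lemma weak_solution_cong:
  "(\<And>G. G \<in> Sspace \<psi> lam \<Longrightarrow> d G = d' G) \<Longrightarrow> weak_solution d g \<longleftrightarrow> weak_solution d' g"
  by (simp add: weak_solution_def)

lemma strong_cont_path_add_const:
  assumes "c \<in> Sdual \<psi> lam" and "strong_cont_path \<psi> lam p"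
  shows "strong_cont_path \<psi> lam (\<lambda>t F. c F + p t F)"
  using assms Sdual_lincomb[OF assms(1), of _ 1 1] by (simp add: strong_cont_path_def)

lemma is_solution_iff_weak_solution:
  "is_solution \<beta> \<alpha> \<alpha>L \<alpha>R thL thR \<psi> lam \<theta>0 \<theta> \<longleftrightarrow>
     (\<forall>t\<ge>0. \<theta> t \<in> Sdual \<psi> lam)
   \<and> (\<exists>g. weak_solution (\<lambda>G. \<theta>0 G - hdu \<beta> \<alpha> \<alpha>L \<alpha>R thL thR G) g
        \<and> (\<forall>G\<in>Sspace \<psi> lam. \<forall>t\<ge>0. \<theta> t G = hdu \<beta> \<alpha> \<alpha>L \<alpha>R thL thR G + g t G))"
  unfolding is_solution_def weak_solution_def by auto

lemma is_solution_unique: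
  assumes "is_solution \<beta> \<alpha> \<alpha>L \<alpha>R thL thR \<psi> lam \<theta>0 \<theta>" "is_solution \<beta> \<alpha> \<alpha>L \<alpha>R thL thR \<psi> lam \<theta>0 \<theta>'"
    and "t \<ge> 0" "G \<in> Sspace \<psi> lam"
  shows "\<theta> t G = \<theta>' t G"
proof -
  let ?d = "\<lambda>G. \<theta>0 G - hdu \<beta> \<alpha> \<alpha>L \<alpha>R thL thR G"
  obtain g g' where "weak_solution ?d g" "weak_solution ?d g'"
    and "\<theta> t G = hdu \<beta> \<alpha> \<alpha>L \<alpha>R thL thR G + g t G" "\<theta>' t G = hdu \<beta> \<alpha> \<alpha>L \<alpha>R thL thR G + g' t G"
    using assms unfolding is_solution_iff_weak_solution by blast
  then show ?thesis
    using weak_solution_unique[OF _ _ assms(3,4)] by simp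
qed

(* Elements of Sdual vanish outside Sspace, so h du has to be cut off there. *)
lemma is_solution_heat_semigroup:
  fixes \<beta> \<alpha> \<alpha>L \<alpha>R thL thR :: real and \<theta>0 :: "(real \<Rightarrow> real) \<Rightarrow> real"
  defines "h \<equiv> \<lambda>F. if F \<in> Sspace \<psi> lam then hdu \<beta> \<alpha> \<alpha>L \<alpha>R thL thR F else 0"
  assumes \<theta>0: "\<theta>0 \<in> Sdual \<psi> lam"
  shows "is_solution \<beta> \<alpha> \<alpha>L \<alpha>R thL thR \<psi> lam \<theta>0 (\<lambda>t F. h F + heat_semigroup (\<lambda>F. \<theta>0 F - h F) t F)"
    and "strong_cont_path \<psi> lam (\<lambda>t F. h F + heat_semigroup (\<lambda>F. \<theta>0 F - h F) t F)"
proof -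
  have h: "h \<in> Sdual \<psi> lam"
    unfolding h_def hdu_eq_L2inner by (rule Sdual_restrict_L2inner[OF hprof_sq_int])
  let ?d = "\<lambda>F. \<theta>0 F - h F"
  have d: "?d \<in> Sdual \<psi> lam"
    using Sdual_lincomb[OF \<theta>0 h, of 1 "-1"] by simp
  have "weak_solution (\<lambda>G. \<theta>0 G - hdu \<beta> \<alpha> \<alpha>L \<alpha>R thL thR G) (heat_semigroup ?d)"
    using weak_solution_heat_semigroup[OF d] by (rule weak_solution_cong[THEN iffD1, rotated]) (simp add: h_def)
  then show "is_solution \<beta> \<alpha> \<alpha>L \<alpha>R thL thR \<psi> lam \<theta>0 (\<lambda>t F. h F + heat_semigroup ?d t F)"
    unfolding is_solution_iff_weak_solution
    using Sdual_lincomb[OF h heat_semigroup_Sdual[OF d], of _ 1 1] by (auto simp: h_def)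
  show "strong_cont_path \<psi> lam (\<lambda>t F. h F + heat_semigroup ?d t F)"
    by (intro strong_cont_path_add_const h strong_cont_path_heat_semigroup d)
qed

end

theorem proposition3p2:
  fixes \<alpha> \<alpha>L \<alpha>R thL thR \<beta> :: real
    and \<psi> :: "nat \<Rightarrow> real \<Rightarrow> real" and lam :: "nat \<Rightarrow> real"
    and \<theta>0 :: "(real \<Rightarrow> real) \<Rightarrow> real"
  assumes "\<alpha> > 0" "\<alpha>L > 0" "\<alpha>R > 0" "thL > 0" "thR > 0" "\<beta> \<ge> 0"
    and "is_eigenbasis \<beta> \<alpha> \<alpha>L \<alpha>R \<psi> lam"
    and "\<theta>0 \<in> Sdual \<psi> lam"
  shows "\<exists>\<theta>. is_solution \<beta> \<alpha> \<alpha>L \<alpha>R thL thR \<psi> lam \<theta>0 \<theta> \<and> strong_cont_path \<psi> lam \<theta>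
           \<and> (\<forall>\<theta>'. is_solution \<beta> \<alpha> \<alpha>L \<alpha>R thL thR \<psi> lam \<theta>0 \<theta>' \<and> strong_cont_path \<psi> lam \<theta>'
                 \<longrightarrow> (\<forall>t\<ge>0. \<forall>G\<in>Sspace \<psi> lam. \<theta>' t G = \<theta> t G))"
proof -
  interpret spectral_basis \<psi> lam
  proof
    show "lam n \<ge> 0" for n
      using assms(7) by (intro eigenvalue_nonneg[OF assms(1-3)]) (auto simp: is_eigenbasis_def)
  qed (use assms(7) in \<open>auto simp: is_eigenbasis_def\<close>)
  obtain \<theta> where "is_solution \<beta> \<alpha> \<alpha>L \<alpha>R thL thR \<psi> lam \<theta>0 \<theta>" "strong_cont_path \<psi> lam \<theta>"
    using is_solution_heat_semigroup[OF assms(8), of \<beta> \<alpha> \<alpha>L \<alpha>R thL thR] by blast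
  then show ?thesis
    using is_solution_unique[of \<beta> \<alpha> \<alpha>L \<alpha>R thL thR \<theta>0] by blast
qed

end
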